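(* Let $s\geqslant0$. For every formula $\varphi$ of $TI_s$: if $TI_s\vdash\varphi$, then $TI_s^*\vdash(\bar\varphi)^*$, where $\bar\varphi$ is the universal closure of $\varphi$.
   Context: Language of $TI$: variables $x^n,y^n,z^n,\dots$ of each type $n\geqslant0$; constant $0$ and function symbols $S,+,\cdot$ on type 0; predicates $=_n$ and $\in_n$. Terms of type 0 are built from type-0 variables and $0$ by $S,+,\cdot$; terms of type $n\geqslant1$ are variables. Atomic formulas: $t=_nr$ ($t,r$ of type $n$) and $t\in_n\tau$ ($t$ of type $n$, $\tau$ of type $n+1$). $srt(\varphi)$ is the maximal type of free variables of $\varphi$. $TI$: classical predicate logic with equality and axioms $Sx^0\neq0$, $Sx=Sy\supset x=y$, $x+0=x$, $x+Sy=S(x+y)$, $x\cdot0=0$, $x\cdot Sy=x\cdot y+x$, induction on type 0 for all formulas, comprehension $\exists x^{n+1}\forall z^n(z\in x\equiv\varphi(z))$ for all $\varphi$ with $srt(\varphi)\leqslant n+1$ and $x^{n+1}$ not free in $\varphi$, and extensionality $\forall z^n(z\in x^{n+1}\equiv z\in y^{n+1})\supset x=y$. $TI_s$ is the fragment with all types $\leqslant s$; $TI_s^*$ is $TI_s$ without the extensionality axiom. The relation $x^n\approx_ny^n$: $x^0\approx_0y^0$ is $x=y$; $x^{n+1}\approx_{n+1}y^{n+1}$ is $(\forall z^n\in x)(\exists u^n\in y)(z\approx_nu)\wedge(\forall z^n\in y)(\exists u^n\in x)(z\approx_nu)$. Translation $\varphi\mapsto\varphi^*$: $(t=_n\tau)^*$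 is $t\approx_n\tau$; $(t\in_n\tau)^*$ is $(\exists z^n\in\tau)(z\approx_nt)$; $\bot^*=\bot$; $*$ commutes with $\wedge,\vee,\supset$ and with $\forall x^n,\exists x^n$. *)

theory Defs
  imports Main "HOL-Library.Product_Lexorder"
begin

text \<open>A variable is a pair (n, i): the variable number i of type n.
  Terms: variables, 0, S, +, *.  Only type-0 terms are compound (enforced by typing).\<close>

type_synonym var = "nat \<times> nat"

datatype trm = V nat nat | Zr | Sc trm | Pl trm trm | Tm trm trm

datatype fm =
    FBot
  | FEq nat trm trm
  | FMem nat trm trm
  | FAnd fm fm
  | FOr fm fm
  | FImp fm fm
  | FAll nat nat fm
  | FEx nat nat fm

definition FNeg :: "fm \<Rightarrow> fm" where "FNeg A = FImp A FBot"
definition FIff :: "fm \<Rightarrow> fm \<Rightarrow> fm" where "FIff A B = FAnd (FImp A B) (FImp B A)"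

fun wt :: "trm \<Rightarrow> nat \<Rightarrow> bool" where
  "wt (V n i) m = (m = n)"
| "wt Zr m = (m = 0)"
| "wt (Sc t) m = (m = 0 \<and> wt t 0)"
| "wt (Pl t r) m = (m = 0 \<and> wt t 0 \<and> wt r 0)"
| "wt (Tm t r) m = (m = 0 \<and> wt t 0 \<and> wt r 0)"

fun wff :: "nat \<Rightarrow> fm \<Rightarrow> bool" where
  "wff s FBot = True"
| "wff s (FEq n t r) = (n \<le> s \<and> wt t n \<and> wt r n)"
| "wff s (FMem n t r) = (n + 1 \<le> s \<and> wt t n \<and> wt r (n + 1))"
| "wff s (FAnd A B) = (wff s A \<and> wff s B)"
| "wff s (FOr A B) = (wff s A \<and> wff s B)"
| "wff s (FImp A B) = (wff s A \<and> wff s B)"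
| "wff s (FAll n i A) = (n \<le> s \<and> wff s A)"
| "wff s (FEx n i A) = (n \<le> s \<and> wff s A)"

fun vt :: "trm \<Rightarrow> var set" where
  "vt (V n i) = {(n, i)}"
| "vt Zr = {}"
| "vt (Sc t) = vt t"
| "vt (Pl t r) = vt t \<union> vt r"
| "vt (Tm t r) = vt t \<union> vt r"

fun fv :: "fm \<Rightarrow> var set" where
  "fv FBot = {}"
| "fv (FEq n t r) = vt t \<union> vt r"
| "fv (FMem n t r) = vt t \<union> vt r"
| "fv (FAnd A B) = fv A \<union> fv B"
| "fv (FOr A B) = fv A \<union> fv B"
| "fv (FImp A B) = fv A \<union> fv B"
| "fv (FAll n i A) = fv A - {(n, i)}"
| "fv (FEx n i A) = fv A - {(n, i)}"

text \<open>srt: maximal type of free variables (0 if there are none).\<close>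
definition srt :: "fm \<Rightarrow> nat" where
  "srt A = (if fv A = {} then 0 else Max (fst ` fv A))"

fun substt :: "trm \<Rightarrow> var \<Rightarrow> trm \<Rightarrow> trm" where
  "substt (V n i) x t = (if (n, i) = x then t else V n i)"
| "substt Zr x t = Zr"
| "substt (Sc r) x t = Sc (substt r x t)"
| "substt (Pl r q) x t = Pl (substt r x t) (substt q x t)"
| "substt (Tm r q) x t = Tm (substt r x t) (substt q x t)"

text \<open>Substitution of t for the free occurrences of x (no renaming; used only
  together with the side condition freefor).\<close>
fun subst :: "fm \<Rightarrow> var \<Rightarrow> trm \<Rightarrow> fm" where
  "subst FBot x t = FBot"
| "subst (FEq n r q) x t = FEq n (substt r x t) (substt q x t)"
| "subst (FMem n r q) x t = FMem n (substt r x t) (substt q x t)"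
| "subst (FAnd A B) x t = FAnd (subst A x t) (subst B x t)"
| "subst (FOr A B) x t = FOr (subst A x t) (subst B x t)"
| "subst (FImp A B) x t = FImp (subst A x t) (subst B x t)"
| "subst (FAll n i A) x t = (if (n, i) = x then FAll n i A else FAll n i (subst A x t))"
| "subst (FEx n i A) x t = (if (n, i) = x then FEx n i A else FEx n i (subst A x t))"

fun freefor :: "trm \<Rightarrow> var \<Rightarrow> fm \<Rightarrow> bool" where
  "freefor t x FBot = True"
| "freefor t x (FEq n r q) = True"
| "freefor t x (FMem n r q) = True"
| "freefor t x (FAnd A B) = (freefor t x A \<and> freefor t x B)"
| "freefor t x (FOr A B) = (freefor t x A \<and> freefor t x B)"
| "freefor t x (FImp A B) = (freefor t x A \<and> freefor t x B)"
| "freefor t x (FAll n i A) = ((n, i) = x \<or> x \<notin> fv A \<or> ((n, i) \<notin> vt t \<and> freefor t x A))"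
| "freefor t x (FEx n i A) = ((n, i) = x \<or> x \<notin> fv A \<or> ((n, i) \<notin> vt t \<and> freefor t x A))"

inductive logax :: "fm \<Rightarrow> bool" where
  "logax (FImp A (FImp B A))"
| "logax (FImp (FImp A (FImp B C)) (FImp (FImp A B) (FImp A C)))"
| "logax (FImp (FAnd A B) A)"
| "logax (FImp (FAnd A B) B)"
| "logax (FImp A (FImp B (FAnd A B)))"
| "logax (FImp A (FOr A B))"
| "logax (FImp B (FOr A B))"
| "logax (FImp (FImp A C) (FImp (FImp B C) (FImp (FOr A B) C)))"
| "logax (FImp FBot A)"
| "logax (FImp (FNeg (FNeg A)) A)"
| "wt t n \<Longrightarrow> freefor t (n, i) A \<Longrightarrow> logax (FImp (FAll n i A) (subst A (n, i) t))"
| "wt t n \<Longrightarrow> freefor t (n, i) A \<Longrightarrow> logax (FImp (subst A (n, i) t) (FEx n i A))"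
| "wt t n \<Longrightarrow> logax (FEq n t t)"
| "wt t n \<Longrightarrow> wt r n \<Longrightarrow> freefor t (n, i) A \<Longrightarrow> freefor r (n, i) A \<Longrightarrow>
     logax (FImp (FEq n t r) (FImp (subst A (n, i) t) (subst A (n, i) r)))"

text \<open>Nonlogical axioms of TI_s; the flag e says whether extensionality is included
  (e = True: TI_s, e = False: TI_s^*).  Restriction to types \<le> s is imposed in prv.\<close>
inductive tiax :: "nat \<Rightarrow> bool \<Rightarrow> fm \<Rightarrow> bool" where
  succ_ne0: "tiax s e (FNeg (FEq 0 (Sc (V 0 i)) Zr))"
| succ_inj: "tiax s e (FImp (FEq 0 (Sc (V 0 i)) (Sc (V 0 j))) (FEq 0 (V 0 i) (V 0 j)))"
| plus0: "tiax s e (FEq 0 (Pl (V 0 i) Zr) (V 0 i))"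
| plusS: "tiax s e (FEq 0 (Pl (V 0 i) (Sc (V 0 j))) (Sc (Pl (V 0 i) (V 0 j))))"
| times0: "tiax s e (FEq 0 (Tm (V 0 i) Zr) Zr)"
| timesS: "tiax s e (FEq 0 (Tm (V 0 i) (Sc (V 0 j))) (Pl (Tm (V 0 i) (V 0 j)) (V 0 i)))"
| ind: "tiax s e (FImp (FAnd (subst A (0, i) Zr)
                              (FAll 0 i (FImp A (subst A (0, i) (Sc (V 0 i))))))
                        (FAll 0 i A))"
| compr: "srt A \<le> n + 1 \<Longrightarrow> (n + 1, i) \<notin> fv A \<Longrightarrow>
     tiax s e (FEx (n + 1) i (FAll n k (FIff (FMem n (V n k) (V (n + 1) i)) A)))"
| ext: "e \<Longrightarrow> tiax s e (FImp (FAll n k (FIff (FMem n (V n k) (V (n + 1) i))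
                                                (FMem n (V n k) (V (n + 1) j))))
                             (FEq (n + 1) (V (n + 1) i) (V (n + 1) j)))"

text \<open>prv s True A: TI_s proves A;  prv s False A: TI_s^* proves A.
  Every formula in a derivation is a formula of TI_s.\<close>
inductive prv :: "nat \<Rightarrow> bool \<Rightarrow> fm \<Rightarrow> bool" where
  lax: "logax A \<Longrightarrow> wff s A \<Longrightarrow> prv s e A"
| nax: "tiax s e A \<Longrightarrow> wff s A \<Longrightarrow> prv s e A"
| mp: "prv s e (FImp A B) \<Longrightarrow> prv s e A \<Longrightarrow> prv s e B"
| allI: "prv s e (FImp B A) \<Longrightarrow> (n, i) \<notin> fv B \<Longrightarrow> n \<le> s \<Longrightarrow> prv s e (FImp B (FAll n i A))"
| exE: "prv s e (FImp A B) \<Longrightarrow> (n, i) \<notin> fv B \<Longrightarrow> n \<le> s \<Longrightarrow> prv s e (FImp (FEx n i A) B)"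

text \<open>x \<approx>_n y.  For n+1 the bound variables z, u have type n, hence cannot
  clash with x, y (of type n+1).\<close>
fun approx :: "nat \<Rightarrow> trm \<Rightarrow> trm \<Rightarrow> fm" where
  "approx 0 t r = FEq 0 t r"
| "approx (Suc n) x y =
     FAnd (FAll n 0 (FImp (FMem n (V n 0) x) (FEx n 1 (FAnd (FMem n (V n 1) y) (approx n (V n 0) (V n 1))))))
          (FAll n 0 (FImp (FMem n (V n 0) y) (FEx n 1 (FAnd (FMem n (V n 1) x) (approx n (V n 0) (V n 1))))))"

fun maxidx :: "trm \<Rightarrow> nat" where
  "maxidx (V n i) = i"
| "maxidx Zr = 0"
| "maxidx (Sc t) = maxidx t"
| "maxidx (Pl t r) = max (maxidx t) (maxidx r)"
| "maxidx (Tm t r) = max (maxidx t) (maxidx r)"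

fun star :: "fm \<Rightarrow> fm" where
  "star FBot = FBot"
| "star (FEq n t r) = approx n t r"
| "star (FMem n t r) =
     (let k = Suc (maxidx t) in FEx n k (FAnd (FMem n (V n k) r) (approx n (V n k) t)))"
| "star (FAnd A B) = FAnd (star A) (star B)"
| "star (FOr A B) = FOr (star A) (star B)"
| "star (FImp A B) = FImp (star A) (star B)"
| "star (FAll n i A) = FAll n i (star A)"
| "star (FEx n i A) = FEx n i (star A)"

definition closure :: "fm \<Rightarrow> fm" where
  "closure A = foldr (\<lambda>(n, i) B. FAll n i B) (sorted_list_of_set (fv A)) A"

end

theory Submission
  imports Defs
begin

text \<open>
  The translation theorem is proved by induction on the derivation of \<open>\<phi>\<close> in \<open>TI\<^sub>s\<close>:
  for every axiom \<open>A\<close> of \<open>TI\<^sub>s\<close> the translation \<open>A\<^sup>*\<close> is derivable in \<open>TI\<^sub>s\<^sup>*\<close>, and the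
  rules (modus ponens, \<open>\<forall>\<close>-introduction, \<open>\<exists>\<close>-elimination) are preserved because \<open>*\<close>
  commutes with the connectives and does not change free variables.  Since \<open>*\<close> also
  commutes with universal quantification, the closure is then obtained by generalization.

  The axioms of \<open>TI\<^sub>s\<close>
  are treated next: arithmetic axioms are unchanged, induction and comprehension translate
  into instances of induction and comprehension up to provable equivalence, and the
  translated extensionality axiom holds by the definition of \<open>\<approx>\<^sub>n\<^sub>+\<^sub>1\<close>.
\<close>

text \<open>Bound variables of a formula; a variable that is neither free nor bound is
  available for renaming.\<close>
fun bv :: "fm \<Rightarrow> var set" where
  "bv FBot = {}"
| "bv (FEq n t r) = {}"
| "bv (FMem n t r) = {}"
| "bv (FAnd A B) = bv A \<union> bv B"
| "bv (FOr A B) = bv A \<union> bv B"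
| "bv (FImp A B) = bv A \<union> bv B"
| "bv (FAll n i A) = insert (n, i) (bv A)"
| "bv (FEx n i A) = insert (n, i) (bv A)"

lemma finite_vt[simp]: "finite (vt t)" by (induction t) auto
lemma finite_fv[simp]: "finite (fv A)" by (induction A) auto
lemma finite_bv[simp]: "finite (bv A)" by (induction A) auto

text \<open>Every type has infinitely many variables, so fresh variables exist.\<close>
lemma fresh_var: "finite (S :: var set) \<Longrightarrow> \<exists>j. (n, j) \<notin> S"
proof -
  assume f: "finite S"
  have "Suc (Max (snd ` S)) \<notin> snd ` S"
    using Max_ge[of "snd ` S"] f by (metis Suc_n_not_le_n finite_imageI)
  thus ?thesis by (metis image_eqI snd_conv)
qed

lemma vt_type: "wt t m \<Longrightarrow> (k, j) \<in> vt t \<Longrightarrow> k = m"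
  by (induction t arbitrary: m) auto

lemma vt_type_le: "wt t m \<Longrightarrow> \<forall>z\<in>vt t. m \<le> fst z"
  using vt_type by fastforce

lemma wt_Suc: "wt t (Suc m) \<Longrightarrow> \<exists>i. t = V (Suc m) i"
  by (cases t) auto

lemma wt_unique: "wt t m \<Longrightarrow> wt t n \<Longrightarrow> m = n"
  by (cases t) auto

text \<open>The index \<open>Suc (maxidx t)\<close> used by the translation of \<open>t \<in> \<tau>\<close> is fresh for \<open>t\<close>.\<close>
lemma vt_maxidx: "(n, k) \<in> vt t \<Longrightarrow> k \<le> maxidx t"
  by (induction t) auto

lemma maxidx_fresh[simp]: "(n, Suc (maxidx t)) \<notin> vt t"
  using vt_maxidx by fastforce

lemma substt_novar: "z \<notin> vt u \<Longrightarrow> substt u z c = u"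
  by (induction u) auto

lemma substt_other_type[simp]: "wt a n \<Longrightarrow> fst x \<noteq> n \<Longrightarrow> substt a x c = a"
  using substt_novar vt_type by (metis prod.collapse)

lemma substt_wt: "wt u m \<Longrightarrow> wt t (fst x) \<Longrightarrow> wt (substt u x t) m"
  by (induction u arbitrary: m) auto

lemma substt_wt_rev: "wt t (fst x) \<Longrightarrow> wt (substt u x t) m \<Longrightarrow> wt u m"
proof (induction u arbitrary: m)
  case (V k j) thus ?case using wt_unique by (cases "(k, j) = x") auto
qed auto

lemma vt_substt: "vt (substt u x t) \<subseteq> (vt u - {x}) \<union> vt t"
  by (induction u) auto

lemma substt_twice: "(n, j) \<notin> vt u \<Longrightarrow> substt (substt u x (V n j)) (n, j) c = substt u x c"
  by (induction u) auto

lemma substt_self[simp]: "substt u (n, i) (V n i) = u"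
  by (induction u) auto

lemma subst_nofv: "x \<notin> fv B \<Longrightarrow> subst B x t = B"
  by (induction B) (auto simp: substt_novar)

lemma subst_self[simp]: "subst B (n, i) (V n i) = B"
  by (induction B) auto

lemma fv_subst: "fv (subst B x t) \<subseteq> (fv B - {x}) \<union> vt t"
proof (induction B)
  case (FEq n r q) thus ?case using vt_substt[of r x t] vt_substt[of q x t] by auto
next
  case (FMem n r q) thus ?case using vt_substt[of r x t] vt_substt[of q x t] by auto
qed auto

lemma wff_subst: "wff s A \<Longrightarrow> wt t (fst x) \<Longrightarrow> wff s (subst A x t)"
  by (induction A) (auto simp: substt_wt)

lemma wff_subst_rev: "wt t (fst x) \<Longrightarrow> wff s (subst A x t) \<Longrightarrow> wff s A"
proof (induction A)
  case (FEq n u v) thus ?case using substt_wt_rev[of t x u n] substt_wt_rev[of t x v n] by simp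
next
  case (FMem n u v) thus ?case using substt_wt_rev[of t x u n] substt_wt_rev[of t x v "n+1"] by simp
next
  case (FAll n i B) thus ?case by (simp split: if_splits)
next
  case (FEx n i B) thus ?case by (simp split: if_splits)
qed auto

lemma subst_rename_back:
  "(n, j) \<notin> fv B \<Longrightarrow> (n, j) \<notin> bv B \<Longrightarrow> j \<noteq> i \<Longrightarrow>
   subst (subst B (n, i) (V n j)) (n, j) (V n i) = B"
proof (induction B)
  case (FEq n t r) thus ?case by (simp add: substt_twice)
next
  case (FMem n t r) thus ?case by (simp add: substt_twice)
next
  case (FAll n i B) thus ?case by (auto simp: subst_nofv)
next
  case (FEx n i B) thus ?case by (auto simp: subst_nofv)
qed auto

lemma fv_types: "wff s A \<Longrightarrow> (n, i) \<in> fv A \<Longrightarrow> n \<le> s"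
  by (induction A) (auto dest: vt_type)

lemma freefor_self: "freefor (V n i) (n, i) B"
  by (induction B) auto

lemma freefor_nobv: "(\<forall>z\<in>vt t. z \<notin> bv B) \<Longrightarrow> freefor t x B"
  by (induction B) auto

lemma freefor_rename_back:
  "(n, j) \<notin> fv B \<Longrightarrow> (n, j) \<notin> bv B \<Longrightarrow> j \<noteq> i \<Longrightarrow> freefor (V n i) (n, j) (subst B (n, i) (V n j))"
  by (induction B) auto

lemma freefor_Zr: "freefor Zr x B" by (induction B) auto
lemma freefor_ScV: "freefor (Sc (V n i)) (n, i) B" by (induction B) auto

section \<open>The relation \<open>\<approx>\<^sub>n\<close> and the translation, syntactically\<close>

definition half :: "nat \<Rightarrow> trm \<Rightarrow> trm \<Rightarrow> fm" where
  "half m a b = FAll m 0 (FImp (FMem m (V m 0) a) (FEx m 1 (FAnd (FMem m (V m 1) b) (approx m (V m 0) (V m 1)))))"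

lemma approx_Suc: "approx (Suc m) a b = FAnd (half m a b) (half m b a)"
  by (simp add: half_def)

text \<open>The bound variables of \<open>\<approx>\<^sub>n\<close> have types below \<open>n\<close>, so substituting for a variable of
  type at least \<open>n\<close> only affects the two arguments.\<close>
lemma subst_approx: "n \<le> fst y \<Longrightarrow> subst (approx n a b) y c = approx n (substt a y c) (substt b y c)"
proof (induction n arbitrary: a b)
  case 0 thus ?case by simp
next
  case (Suc m)
  have ne: "(m, 0) \<noteq> y" "(m, Suc 0) \<noteq> y" using Suc.prems by auto
  have "subst (approx m (V m 0) (V m 1)) y c = approx m (V m 0) (V m 1)"
    using Suc.IH[of "V m 0" "V m 1"] Suc.prems ne by auto
  thus ?case using ne by simp
qed

lemma freefor_approx: "n \<le> fst y \<Longrightarrow> (\<forall>z\<in>vt c. n \<le> fst z) \<Longrightarrow> freefor c y (approx n a b)"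
proof (induction n arbitrary: a b)
  case 0 thus ?case by simp
next
  case (Suc m)
  have "(m,0) \<notin> vt c" "(m,1) \<notin> vt c" using Suc.prems by fastforce+
  moreover have "\<forall>z\<in>vt c. m \<le> fst z" using Suc.prems(2) by fastforce
  hence "freefor c y (approx m (V m 0) (V m 1))" using Suc.IH[of "V m 0" "V m 1"] Suc.prems(1) by simp
  ultimately show ?case by simp
qed

lemma fv_approx: "wt a n \<Longrightarrow> wt b n \<Longrightarrow> fv (approx n a b) = vt a \<union> vt b"
proof (induction n arbitrary: a b)
  case 0 thus ?case by simp
next
  case (Suc m)
  obtain i j where ab: "a = V (Suc m) i" "b = V (Suc m) j" using Suc.prems wt_Suc by blast
  have "fv (approx m (V m 0) (V m 1)) = {(m,0),(m,1)}" using Suc.IH[of "V m 0" "V m 1"] by auto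
  thus ?case using ab by fastforce
qed

lemma bv_approx: "z \<in> bv (approx n a b) \<Longrightarrow> fst z < n"
proof (induction n arbitrary: a b)
  case (Suc n) thus ?case using Suc.IH[of "V n 0" "V n 1"] by fastforce
qed simp

lemma wff_approx: "wt a n \<Longrightarrow> wt b n \<Longrightarrow> wff s (approx n a b) = (n \<le> s)"
proof (induction n arbitrary: a b)
  case 0 thus ?case by simp
next
  case (Suc m)
  thus ?case using Suc.IH[of "V m 0" "V m 1"] by auto
qed

declare approx.simps(2)[simp del]

lemma fv_half: "wt a (Suc m) \<Longrightarrow> wt b (Suc m) \<Longrightarrow> fv (half m a b) = vt a \<union> vt b"
proof -
  assume "wt a (Suc m)" "wt b (Suc m)"
  then obtain i j where ab: "a = V (Suc m) i" "b = V (Suc m) j" using wt_Suc by blast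
  have "fv (approx m (V m 0) (V m 1)) = {(m,0),(m,1)}" using fv_approx[of "V m 0" m "V m 1"] by auto
  thus ?thesis using ab unfolding half_def by fastforce
qed

lemma wff_half: "wt a (Suc m) \<Longrightarrow> wt b (Suc m) \<Longrightarrow> wff s (half m a b) = (Suc m \<le> s)"
  unfolding half_def using wff_approx[of "V m 0" m "V m 1" s] by auto

definition mb :: "nat \<Rightarrow> nat \<Rightarrow> trm \<Rightarrow> trm \<Rightarrow> fm" where
  "mb m k a v = FAnd (FMem m (V m k) v) (approx m (V m k) a)"

lemma star_FMem: "star (FMem m a v) = FEx m (Suc (maxidx a)) (mb m (Suc (maxidx a)) a v)"
  by (simp add: mb_def Let_def)

declare star.simps(3)[simp del]

lemma subst_mb: "(m, k') \<notin> vt a \<Longrightarrow> wt v (Suc m) \<Longrightarrow> subst (mb m k' a v) (m, k') (V m k) = mb m k a v"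
  by (simp add: mb_def subst_approx substt_novar)

lemma subst_mb_gen: "m \<le> fst x \<Longrightarrow> (m, k) \<noteq> x \<Longrightarrow> subst (mb m k a v) x c = mb m k (substt a x c) (substt v x c)"
  by (simp add: mb_def subst_approx)

lemma freefor_mb: "m \<le> fst x \<Longrightarrow> (\<forall>z\<in>vt c. m \<le> fst z) \<Longrightarrow> freefor c x (mb m k a v)"
  by (simp add: mb_def freefor_approx)

lemma fv_mb: "wt a m \<Longrightarrow> wt v (Suc m) \<Longrightarrow> fv (mb m k a v) = insert (m, k) (vt v \<union> vt a)"
  by (auto simp: mb_def fv_approx)

lemma bv_mb: "(m, j) \<notin> bv (mb m k a v)"
  using bv_approx by (fastforce simp: mb_def)

lemma wff_mb: "wt a m \<Longrightarrow> wt v (Suc m) \<Longrightarrow> wff s (mb m k a v) = (Suc m \<le> s)"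
  by (auto simp: mb_def wff_approx)

lemma fv_star_mem: "wt a m \<Longrightarrow> wt v (Suc m) \<Longrightarrow> fv (star (FMem m a v)) = vt a \<union> vt v"
proof -
  assume w: "wt a m" "wt v (Suc m)"
  hence "(m, Suc (maxidx a)) \<notin> vt v" using vt_type by fastforce
  thus ?thesis using w by (auto simp: star_FMem fv_mb)
qed

lemma fv_star: "wff s A \<Longrightarrow> fv (star A) = fv A"
  by (induction A) (auto simp: fv_approx fv_star_mem)

lemma wff_star_mem: "wt a m \<Longrightarrow> wt v (Suc m) \<Longrightarrow> wff s (star (FMem m a v)) = (Suc m \<le> s)"
  by (auto simp: star_FMem wff_mb)

lemma wff_star: "wff s A \<Longrightarrow> wff s (star A)"
  by (induction A) (auto simp: wff_approx wff_star_mem)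

lemma srt_star: "wff s A \<Longrightarrow> srt (star A) = srt A"
  by (simp add: srt_def fv_star)

lemma star_FIff: "star (FIff A B) = FIff (star A) (star B)" by (simp add: FIff_def)
lemma star_FNeg: "star (FNeg A) = FNeg (star A)" by (simp add: FNeg_def)

lemma subst_FIff: "subst (FIff A B) x t = FIff (subst A x t) (subst B x t)"
  by (simp add: FIff_def)

section \<open>Derivations from hypotheses\<close>

lemma prv_wff: "prv s e A \<Longrightarrow> wff s A"
  by (induction rule: prv.induct) auto

text \<open>\<open>imps [A\<^sub>1, \<dots>, A\<^sub>k] B\<close> is \<open>A\<^sub>1 \<supset> \<dots> \<supset> A\<^sub>k \<supset> B\<close>; deriving it means deriving \<open>B\<close> from the
  hypotheses \<open>A\<^sub>1, \<dots>, A\<^sub>k\<close>.  The conjunction \<open>cj G\<close> of the hypotheses is used to reduce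
  the quantifier rules with hypotheses to the rules of the Hilbert calculus.\<close>
fun imps :: "fm list \<Rightarrow> fm \<Rightarrow> fm" where
  "imps [] B = B"
| "imps (A # G) B = FImp A (imps G B)"

definition TT :: fm where "TT = FImp FBot FBot"

fun cj :: "fm list \<Rightarrow> fm" where
  "cj [] = TT"
| "cj (A # G) = FAnd A (cj G)"

abbreviation wffl :: "nat \<Rightarrow> fm list \<Rightarrow> bool" where
  "wffl s G \<equiv> (\<forall>C\<in>set G. wff s C)"

lemma wff_imps[simp]: "wff s (imps G B) = (wffl s G \<and> wff s B)"
  by (induction G) auto

lemma wff_TT[simp]: "wff s TT" by (simp add: TT_def)
lemma fv_TT[simp]: "fv TT = {}" by (simp add: TT_def)

lemma wff_cj[simp]: "wff s (cj G) = wffl s G"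
  by (induction G) auto

lemma fv_cj: "fv (cj G) = \<Union> (fv ` set G)"
  by (induction G) auto

lemma imps_append: "imps (G @ H) B = imps G (imps H B)"
  by (induction G) auto

text \<open>From here on, derivations are in a fixed theory \<open>TI\<^sub>s\<close> (\<open>e\<close> true) or \<open>TI\<^sub>s\<^sup>*\<close> (\<open>e\<close> false);
  since \<open>e\<close> is arbitrary, no derivation below uses extensionality.\<close>
context fixes s :: nat and e :: bool
begin

abbreviation pr :: "fm \<Rightarrow> bool" where "pr A \<equiv> prv s e A"

lemma ax: "logax A \<Longrightarrow> wff s A \<Longrightarrow> pr A" by (rule prv.lax)

lemma axK: "wff s A \<Longrightarrow> wff s B \<Longrightarrow> pr (FImp A (FImp B A))"
  by (rule ax) (auto intro: logax.intros)

lemma axS: "wff s A \<Longrightarrow> wff s B \<Longrightarrow> wff s C \<Longrightarrow>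
   pr (FImp (FImp A (FImp B C)) (FImp (FImp A B) (FImp A C)))"
  by (rule ax) (auto intro: logax.intros)

lemma imp_refl: "wff s A \<Longrightarrow> pr (FImp A A)"
proof -
  assume w: "wff s A"
  have 1: "pr (FImp (FImp A (FImp (FImp A A) A)) (FImp (FImp A (FImp A A)) (FImp A A)))"
    using axS w by simp
  have 2: "pr (FImp A (FImp (FImp A A) A))" using axK w by simp
  have 3: "pr (FImp A (FImp A A))" using axK w by simp
  show ?thesis using prv.mp[OF prv.mp[OF 1 2] 3] .
qed

lemma K_intro: "pr B \<Longrightarrow> wff s A \<Longrightarrow> pr (FImp A B)"
  using prv.mp[OF axK[of B A]] prv_wff by blast

lemma syl: "pr (FImp A B) \<Longrightarrow> pr (FImp B C) \<Longrightarrow> pr (FImp A C)"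
proof -
  assume ab: "pr (FImp A B)" and bc: "pr (FImp B C)"
  have w: "wff s A" "wff s B" "wff s C" using prv_wff[OF ab] prv_wff[OF bc] by auto
  have "pr (FImp A (FImp B C))" using K_intro[OF bc] w by simp
  hence "pr (FImp (FImp A B) (FImp A C))" using prv.mp[OF axS[of A B C]] w by blast
  thus ?thesis using ab prv.mp by metis
qed

lemma imps_mp_gen: "wffl s G \<Longrightarrow> wff s A \<Longrightarrow> wff s B \<Longrightarrow>
  pr (FImp (imps G (FImp A B)) (FImp (imps G A) (imps G B)))"
proof (induction G)
  case Nil thus ?case by (simp add: imp_refl)
next
  case (Cons C G)
  let ?P = "imps G (FImp A B)" and ?Q = "imps G A" and ?R = "imps G B"
  have w: "wff s C" "wff s ?P" "wff s ?Q" "wff s ?R" using Cons.prems by auto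
  have ih: "pr (FImp ?P (FImp ?Q ?R))" using Cons by simp
  have "pr (FImp C (FImp ?P (FImp ?Q ?R)))" using K_intro[OF ih] w by simp
  hence 1: "pr (FImp (FImp C ?P) (FImp C (FImp ?Q ?R)))" using prv.mp[OF axS[of C ?P "FImp ?Q ?R"]] w by simp
  have 2: "pr (FImp (FImp C (FImp ?Q ?R)) (FImp (FImp C ?Q) (FImp C ?R)))" using axS[of C ?Q ?R] w by simp
  show ?case using syl[OF 1 2] by simp
qed

lemma ctx_mp: "pr (imps G (FImp A B)) \<Longrightarrow> pr (imps G A) \<Longrightarrow> pr (imps G B)"
proof -
  assume 1: "pr (imps G (FImp A B))" and 2: "pr (imps G A)"
  have "wffl s G" "wff s A" "wff s B" using prv_wff[OF 1] by auto
  thus ?thesis using prv.mp[OF prv.mp[OF imps_mp_gen[of G A B] 1] 2] by simp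
qed

lemma ctx_lift: "pr B \<Longrightarrow> wffl s G \<Longrightarrow> pr (imps G B)"
proof (induction G)
  case Nil thus ?case by simp
next
  case (Cons C G) thus ?case using K_intro by simp
qed

lemma hyp_imps: "wffl s G \<Longrightarrow> wff s A \<Longrightarrow> pr (FImp A (imps G A))"
proof (induction G)
  case Nil thus ?case by (simp add: imp_refl)
next
  case (Cons C G)
  hence 1: "pr (FImp A (imps G A))" by simp
  have 2: "pr (FImp (imps G A) (FImp C (imps G A)))" using axK Cons.prems by simp
  show ?case using syl[OF 1 2] by simp
qed

lemma ctx_hyp: "A \<in> set G \<Longrightarrow> wffl s G \<Longrightarrow> pr (imps G A)"
proof (induction G)
  case Nil thus ?case by simp
next
  case (Cons C G)
  show ?case
  proof (cases "A = C")
    case True thus ?thesis using hyp_imps Cons.prems by simp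
  next
    case False
    hence "pr (imps G A)" using Cons by simp
    thus ?thesis using K_intro Cons.prems by simp
  qed
qed

lemma ctx_app: assumes "pr (FImp A B)" "pr (imps G A)" shows "pr (imps G B)"
proof -
  have "wffl s G" using prv_wff[OF assms(2)] by simp
  hence "pr (imps G (FImp A B))" using ctx_lift[OF assms(1)] by simp
  thus ?thesis using ctx_mp assms(2) by simp
qed

lemma ctx_app2: assumes "pr (FImp A (FImp B C))" "pr (imps G A)" "pr (imps G B)" shows "pr (imps G C)"
  using ctx_mp[OF ctx_app[OF assms(1,2)] assms(3)] .

lemma ctx_cut_gen: "(\<forall>C\<in>set G. pr (imps G' C)) \<Longrightarrow> pr (imps G' (imps G B)) \<Longrightarrow> pr (imps G' B)"
proof (induction G)
  case Nil thus ?case by simp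
next
  case (Cons C G)
  have "pr (imps G' (imps G B))" using ctx_mp[of G' C "imps G B"] Cons.prems by simp
  thus ?case using Cons by simp
qed

lemma ctx_cut: "(\<forall>C\<in>set G. pr (imps G' C)) \<Longrightarrow> wffl s G' \<Longrightarrow> pr (imps G B) \<Longrightarrow> pr (imps G' B)"
proof -
  assume a: "\<forall>C\<in>set G. pr (imps G' C)" "wffl s G'" "pr (imps G B)"
  have "pr (imps G' (imps G B))" using ctx_lift[OF a(3) a(2)] .
  thus ?thesis using ctx_cut_gen[OF a(1)] by simp
qed

lemma ctx_weaken: assumes "pr (imps G B)" "set G \<subseteq> set G'" "wffl s G'" shows "pr (imps G' B)"
proof -
  have "\<forall>C\<in>set G. pr (imps G' C)" using ctx_hyp assms(2,3) by auto
  thus ?thesis using ctx_cut assms by simp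
qed

lemma ctx_impI: "pr (imps (A # G) B) \<Longrightarrow> pr (imps G (FImp A B))"
proof -
  assume 1: "pr (imps (A # G) B)"
  hence "wffl s (G @ [A])" using prv_wff[OF 1] by auto
  moreover have "set (A # G) \<subseteq> set (G @ [A])" by auto
  ultimately have "pr (imps (G @ [A]) B)" using ctx_weaken[OF 1] by blast
  thus ?thesis by (simp add: imps_append)
qed

lemma ctx_ax: "logax (FImp A B) \<Longrightarrow> wff s (FImp A B) \<Longrightarrow> pr (imps G A) \<Longrightarrow> pr (imps G B)"
  using ctx_app[OF ax] by blast

lemma ctx_conjI: "pr (imps G A) \<Longrightarrow> pr (imps G B) \<Longrightarrow> pr (imps G (FAnd A B))"
proof -
  assume 1: "pr (imps G A)" and 2: "pr (imps G B)"
  have "wff s A" "wff s B" using prv_wff[OF 1] prv_wff[OF 2] by auto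
  hence "pr (FImp A (FImp B (FAnd A B)))" by (intro ax) (auto intro: logax.intros)
  thus ?thesis using ctx_app2 1 2 by simp
qed

lemma ctx_conjE1: assumes "pr (imps G (FAnd A B))" shows "pr (imps G A)"
proof -
  have "wff s (FAnd A B)" using prv_wff[OF assms] by simp
  thus ?thesis by (intro ctx_ax[OF _ _ assms]) (auto intro: logax.intros)
qed

lemma ctx_conjE2: assumes "pr (imps G (FAnd A B))" shows "pr (imps G B)"
proof -
  have "wff s (FAnd A B)" using prv_wff[OF assms] by simp
  thus ?thesis by (intro ctx_ax[OF _ _ assms]) (auto intro: logax.intros)
qed

lemma ctx_disjI1: assumes "pr (imps G A)" "wff s B" shows "pr (imps G (FOr A B))"
proof -
  have "wff s A" using prv_wff[OF assms(1)] by simp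
  thus ?thesis using assms(2) by (intro ctx_ax[OF _ _ assms(1)]) (auto intro: logax.intros)
qed

lemma ctx_disjI2: assumes "pr (imps G B)" "wff s A" shows "pr (imps G (FOr A B))"
proof -
  have "wff s B" using prv_wff[OF assms(1)] by simp
  thus ?thesis using assms(2) by (intro ctx_ax[OF _ _ assms(1)]) (auto intro: logax.intros)
qed

lemma ctx_disjE: "pr (imps G (FOr A B)) \<Longrightarrow> pr (imps (A # G) C) \<Longrightarrow> pr (imps (B # G) C) \<Longrightarrow> pr (imps G C)"
proof -
  assume 0: "pr (imps G (FOr A B))" and 1: "pr (imps (A # G) C)" and 2: "pr (imps (B # G) C)"
  have a: "pr (imps G (FImp A C))" "pr (imps G (FImp B C))" using ctx_impI 1 2 by auto
  have w: "wff s A" "wff s B" "wff s C" using prv_wff[OF 1] prv_wff[OF 2] by auto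
  have "pr (FImp (FImp A C) (FImp (FImp B C) (FImp (FOr A B) C)))" using w by (intro ax) (auto intro: logax.intros)
  hence "pr (imps G (FImp (FOr A B) C))" using ctx_app2 a by simp
  thus ?thesis using ctx_mp 0 by simp
qed

lemma pr_TT: "pr TT" unfolding TT_def by (rule ax) (auto intro: logax.intros)

lemma ctx_cj: "set G \<subseteq> set G' \<Longrightarrow> wffl s G' \<Longrightarrow> pr (imps G' (cj G))"
proof (induction G)
  case Nil thus ?case using ctx_lift pr_TT by simp
next
  case (Cons C G)
  have "pr (imps G' C)" using ctx_hyp Cons.prems by simp
  moreover have "pr (imps G' (cj G))" using Cons by simp
  ultimately show ?case using ctx_conjI by simp
qed

lemma cj_elim: "C \<in> set G \<Longrightarrow> wffl s G \<Longrightarrow> pr (FImp (cj G) C)"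
proof (induction G)
  case Nil thus ?case by simp
next
  case (Cons D G)
  show ?case
  proof (cases "C = D")
    case True
    have "pr (FImp (FAnd D (cj G)) D)" using Cons.prems by (intro ax) (auto intro: logax.intros)
    thus ?thesis using True by simp
  next
    case False
    hence 1: "pr (FImp (cj G) C)" using Cons by simp
    have 2: "pr (FImp (FAnd D (cj G)) (cj G))" using Cons.prems by (intro ax) (auto intro: logax.intros)
    show ?thesis using syl[OF 2 1] by simp
  qed
qed

lemma to_cj: "pr (imps G B) \<Longrightarrow> pr (FImp (cj G) B)"
proof -
  assume 1: "pr (imps G B)"
  hence w: "wffl s G" using prv_wff[OF 1] by simp
  have "\<forall>C\<in>set G. pr (imps [cj G] C)" using cj_elim w by simp
  thus ?thesis using ctx_cut[OF _ _ 1, of "[cj G]"] w by simp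
qed

lemma from_cj: assumes "pr (FImp (cj G) B)" shows "pr (imps G B)"
proof -
  have "wffl s G" using prv_wff[OF assms] by simp
  hence "pr (imps G (cj G))" using ctx_cj by simp
  thus ?thesis using ctx_app[OF assms] by simp
qed

lemma ctx_allI: "pr (imps G A) \<Longrightarrow> (n, i) \<notin> \<Union> (fv ` set G) \<Longrightarrow> n \<le> s \<Longrightarrow> pr (imps G (FAll n i A))"
proof -
  assume 1: "pr (imps G A)" and f: "(n, i) \<notin> \<Union> (fv ` set G)" and n: "n \<le> s"
  have 2: "pr (FImp (cj G) A)" using to_cj 1 by simp
  have "(n, i) \<notin> fv (cj G)" using f fv_cj by simp
  hence "pr (FImp (cj G) (FAll n i A))" using prv.allI[OF 2 _ n] by simp
  thus ?thesis using from_cj by simp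
qed

lemma gen: "pr A \<Longrightarrow> n \<le> s \<Longrightarrow> pr (FAll n i A)"
  using ctx_allI[of "[]"] by simp

lemma ctx_exE: "pr (imps G (FEx n i A)) \<Longrightarrow> pr (imps (A # G) C) \<Longrightarrow> (n, i) \<notin> fv C \<Longrightarrow>
  (n, i) \<notin> \<Union> (fv ` set G) \<Longrightarrow> n \<le> s \<Longrightarrow> pr (imps G C)"
proof -
  assume 0: "pr (imps G (FEx n i A))" and 1: "pr (imps (A # G) C)" and f: "(n, i) \<notin> fv C"
    "(n, i) \<notin> \<Union> (fv ` set G)" and n: "n \<le> s"
  have w: "wffl s G" "wff s A" "wff s C" using prv_wff[OF 1] by auto
  have 2: "pr (FImp (FAnd A (cj G)) C)" using to_cj[OF 1] by simp
  have "wffl s [A, cj G]" using w by simp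
  hence "pr (imps [A, cj G] (FAnd A (cj G)))"
    using ctx_conjI[OF ctx_hyp[of A "[A, cj G]"] ctx_hyp[of "cj G" "[A, cj G]"]] by simp
  hence "pr (imps [A, cj G] C)" by (rule ctx_app[OF 2])
  hence 3: "pr (FImp A (FImp (cj G) C))" by simp
  have "(n, i) \<notin> fv (FImp (cj G) C)" using f fv_cj by simp
  hence "pr (FImp (FEx n i A) (FImp (cj G) C))" using prv.exE[OF 3 _ n] by simp
  hence "pr (imps G (FImp (cj G) C))" using ctx_app 0 by simp
  thus ?thesis using ctx_mp ctx_cj w by simp
qed

lemma ctx_allE: "pr (imps G (FAll n i A)) \<Longrightarrow> wt t n \<Longrightarrow> freefor t (n, i) A \<Longrightarrow> pr (imps G (subst A (n, i) t))"
proof -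
  assume 1: "pr (imps G (FAll n i A))" and t: "wt t n" and f: "freefor t (n, i) A"
  have "wff s (FAll n i A)" using prv_wff[OF 1] by simp
  hence "pr (FImp (FAll n i A) (subst A (n, i) t))" using t f
    by (intro ax) (auto intro: logax.intros simp: wff_subst)
  thus ?thesis using ctx_app 1 by simp
qed

lemma ctx_exI: "pr (imps G (subst A (n, i) t)) \<Longrightarrow> wt t n \<Longrightarrow> freefor t (n, i) A \<Longrightarrow> n \<le> s \<Longrightarrow> wff s A \<Longrightarrow>
   pr (imps G (FEx n i A))"
proof -
  assume 1: "pr (imps G (subst A (n, i) t))" and t: "wt t n" and f: "freefor t (n, i) A" "n \<le> s" "wff s A"
  hence "pr (FImp (subst A (n, i) t) (FEx n i A))" using t f
    by (intro ax) (auto intro: logax.intros simp: wff_subst)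
  thus ?thesis using ctx_app 1 by simp
qed

lemma ctx_allE_self: "pr (imps G (FAll n i A)) \<Longrightarrow> pr (imps G A)"
  using ctx_allE[of G n i A "V n i"] freefor_self by simp

lemma ctx_exI_self: assumes "pr (imps G A)" "n \<le> s" shows "pr (imps G (FEx n i A))"
proof -
  have "wff s A" using prv_wff[OF assms(1)] by simp
  thus ?thesis using ctx_exI[of G A n i "V n i"] freefor_self assms by simp
qed

lemma iff_E1: "pr (imps G (FIff P Q)) \<Longrightarrow> pr (imps G (FImp P Q))"
  unfolding FIff_def by (rule ctx_conjE1)

lemma iff_E2: "pr (imps G (FIff P Q)) \<Longrightarrow> pr (imps G (FImp Q P))"
  unfolding FIff_def by (rule ctx_conjE2)

lemma iff_I: "pr (imps G (FImp P Q)) \<Longrightarrow> pr (imps G (FImp Q P)) \<Longrightarrow> pr (imps G (FIff P Q))"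
  unfolding FIff_def by (rule ctx_conjI)

declare imps.simps(2)[simp del]

lemma imps1: "imps [A] C = FImp A C" by (simp add: imps.simps)
lemma imps2: "imps [A, B] C = FImp A (FImp B C)" by (simp add: imps.simps)

text \<open>With \<open>H\<close> an instance of \<open>\<approx>\<^sub>n\<close> this is the
  induction step of the translated Leibniz law, and with \<open>H\<close> trivial it gives
  congruence of provable equivalence.\<close>
lemma hyp_and_mono:
  assumes "pr (FImp H (FImp A1 B1))" "pr (FImp H (FImp A2 B2))"
  shows "pr (FImp H (FImp (FAnd A1 A2) (FAnd B1 B2)))"
proof -
  let ?G = "[H, FAnd A1 A2]"
  have wG: "wffl s ?G" using prv_wff[OF assms(1)] prv_wff[OF assms(2)] by auto
  have hH: "pr (imps ?G H)" and hA: "pr (imps ?G (FAnd A1 A2))" using ctx_hyp wG by simp_all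
  have "pr (imps ?G (FAnd B1 B2))"
    using ctx_conjI[OF ctx_app2[OF assms(1) hH ctx_conjE1[OF hA]] ctx_app2[OF assms(2) hH ctx_conjE2[OF hA]]] .
  thus ?thesis by (simp add: imps2)
qed

lemma hyp_or_mono:
  assumes "pr (FImp H (FImp A1 B1))" "pr (FImp H (FImp A2 B2))"
  shows "pr (FImp H (FImp (FOr A1 A2) (FOr B1 B2)))"
proof -
  let ?G = "[H, FOr A1 A2]"
  have w: "wffl s ?G" "wff s B1" "wff s B2" using prv_wff[OF assms(1)] prv_wff[OF assms(2)] by auto
  have "pr (imps (A1 # ?G) B1)" using ctx_app2[OF assms(1) ctx_hyp[of H] ctx_hyp[of A1]] w by simp
  hence 1: "pr (imps (A1 # ?G) (FOr B1 B2))" using ctx_disjI1 w by simp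
  have "pr (imps (A2 # ?G) B2)" using ctx_app2[OF assms(2) ctx_hyp[of H] ctx_hyp[of A2]] w by simp
  hence 2: "pr (imps (A2 # ?G) (FOr B1 B2))" using ctx_disjI2 w by simp
  have "pr (imps ?G (FOr A1 A2))" using ctx_hyp w by simp
  thus ?thesis using ctx_disjE[OF _ 1 2] by (simp add: imps2)
qed

lemma hyp_imp_mono:
  assumes "pr (FImp H (FImp B1 A1))" "pr (FImp H (FImp A2 B2))"
  shows "pr (FImp H (FImp (FImp A1 A2) (FImp B1 B2)))"
proof -
  let ?G = "[H, FImp A1 A2, B1]"
  have wG: "wffl s ?G" using prv_wff[OF assms(1)] prv_wff[OF assms(2)] by auto
  have hH: "pr (imps ?G H)" using ctx_hyp wG by simp
  have "pr (imps ?G A1)" using ctx_app2[OF assms(1) hH ctx_hyp[of B1]] wG by simp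
  hence "pr (imps ?G A2)" using ctx_mp[OF ctx_hyp[of "FImp A1 A2"]] wG by simp
  hence "pr (imps ?G B2)" using ctx_app2[OF assms(2) hH] by simp
  thus ?thesis by (simp add: imps.simps)
qed

lemma hyp_all_mono:
  assumes "pr (FImp H (FImp A B))" "(k, j) \<notin> fv H" "k \<le> s"
  shows "pr (FImp H (FImp (FAll k j A) (FAll k j B)))"
proof -
  let ?G = "[H, FAll k j A]"
  have wG: "wffl s ?G" using prv_wff[OF assms(1)] assms(3) by auto
  have "pr (imps ?G A)" using ctx_allE_self[OF ctx_hyp[of "FAll k j A"]] wG by simp
  hence "pr (imps ?G B)" using ctx_app2[OF assms(1) ctx_hyp[of H]] wG by simp
  hence "pr (imps ?G (FAll k j B))" using ctx_allI assms(2,3) by simp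
  thus ?thesis by (simp add: imps2)
qed

lemma hyp_ex_mono:
  assumes "pr (FImp H (FImp A B))" "(k, j) \<notin> fv H" "k \<le> s"
  shows "pr (FImp H (FImp (FEx k j A) (FEx k j B)))"
proof -
  let ?G = "[H, FEx k j A]"
  have wG: "wffl s (A # ?G)" using prv_wff[OF assms(1)] assms(3) by auto
  have "pr (imps (A # ?G) B)" using ctx_app2[OF assms(1) ctx_hyp[of H] ctx_hyp[of A]] wG by simp
  hence "pr (imps (A # ?G) (FEx k j B))" using ctx_exI_self assms(3) by simp
  hence "pr (imps ?G (FEx k j B))" using ctx_exE[OF ctx_hyp[of "FEx k j A"]] wG assms(2,3) by simp
  thus ?thesis by (simp add: imps2)
qed

lemma prv_under_TT: "pr (FImp TT A) \<longleftrightarrow> pr A"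
  using K_intro[of A TT] prv.mp[OF _ pr_TT] by auto

lemma and_mono: "pr (FImp A1 B1) \<Longrightarrow> pr (FImp A2 B2) \<Longrightarrow> pr (FImp (FAnd A1 A2) (FAnd B1 B2))"
  using hyp_and_mono[of TT] by (simp add: prv_under_TT)

lemma or_mono: "pr (FImp A1 B1) \<Longrightarrow> pr (FImp A2 B2) \<Longrightarrow> pr (FImp (FOr A1 A2) (FOr B1 B2))"
  using hyp_or_mono[of TT] by (simp add: prv_under_TT)

lemma imp_mono: "pr (FImp B1 A1) \<Longrightarrow> pr (FImp A2 B2) \<Longrightarrow> pr (FImp (FImp A1 A2) (FImp B1 B2))"
  using hyp_imp_mono[of TT] by (simp add: prv_under_TT)

lemma all_mono: "pr (FImp A B) \<Longrightarrow> k \<le> s \<Longrightarrow> pr (FImp (FAll k j A) (FAll k j B))"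
  using hyp_all_mono[of TT] by (simp add: prv_under_TT)

lemma ex_mono: "pr (FImp A B) \<Longrightarrow> k \<le> s \<Longrightarrow> pr (FImp (FEx k j A) (FEx k j B))"
  using hyp_ex_mono[of TT] by (simp add: prv_under_TT)

definition prv_equiv :: "fm \<Rightarrow> fm \<Rightarrow> bool" where
  "prv_equiv A B \<longleftrightarrow> pr (FImp A B) \<and> pr (FImp B A)"

lemma prv_equiv_refl: "wff s A \<Longrightarrow> prv_equiv A A"
  by (simp add: prv_equiv_def imp_refl)

lemma prv_equiv_conn:
  assumes "prv_equiv A1 B1" "prv_equiv A2 B2"
  shows "prv_equiv (FAnd A1 A2) (FAnd B1 B2)" "prv_equiv (FOr A1 A2) (FOr B1 B2)"
    "prv_equiv (FImp A1 A2) (FImp B1 B2)"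
  using assms by (auto simp: prv_equiv_def intro: and_mono or_mono imp_mono)

lemma prv_equiv_quant:
  assumes "prv_equiv A B" "k \<le> s"
  shows "prv_equiv (FAll k j A) (FAll k j B)" "prv_equiv (FEx k j A) (FEx k j B)"
  using assms by (auto simp: prv_equiv_def intro: all_mono ex_mono)

section \<open>\<open>\<approx>\<^sub>n\<close> is an equivalence relation\<close>

lemma leibniz_ax: "wt t n \<Longrightarrow> wt r n \<Longrightarrow> freefor t (n, i) A \<Longrightarrow> freefor r (n, i) A \<Longrightarrow>
  wff s (FImp (FEq n t r) (FImp (subst A (n, i) t) (subst A (n, i) r))) \<Longrightarrow>
  pr (FImp (FEq n t r) (FImp (subst A (n, i) t) (subst A (n, i) r)))"
  by (rule prv.lax) (auto intro: logax.intros)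

lemma ex_rename:
  assumes "(n, j) \<notin> fv B" "(n, j) \<notin> bv B" "j \<noteq> i" "wff s B" "n \<le> s"
  shows "pr (FImp (FEx n i B) (FEx n j (subst B (n, i) (V n j))))"
proof -
  let ?B' = "subst B (n, i) (V n j)"
  have w: "wff s ?B'" using wff_subst assms(4) by simp
  have 1: "pr (imps [B, FEx n i B] B)" using ctx_hyp[of B "[B, FEx n i B]"] assms(4,5) by simp
  have 2: "subst ?B' (n, j) (V n i) = B" using subst_rename_back assms(1-3) by simp
  have 3: "freefor (V n i) (n, j) ?B'" using freefor_rename_back assms(1-3) by simp
  have 4: "pr (imps [B, FEx n i B] (FEx n j ?B'))"
    using ctx_exI[of "[B, FEx n i B]" ?B' n j "V n i"] 1 2 3 w assms(5) by simp
  have 5: "pr (imps [FEx n i B] (FEx n i B))" using ctx_hyp assms(4,5) by simp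
  have "(n, i) \<notin> fv (FEx n j ?B')" using fv_subst[of B "(n, i)" "V n j"] by auto
  hence "pr (imps [FEx n i B] (FEx n j ?B'))"
    using ctx_exE[OF 5 4] assms(5) by simp
  thus ?thesis by (simp add: imps.simps)
qed

lemma approx_refl: "wt t n \<Longrightarrow> n \<le> s \<Longrightarrow> pr (approx n t t)"
proof (induction n arbitrary: t)
  case 0 thus ?case by (intro prv.lax) (auto intro: logax.intros)
next
  case (Suc m)
  let ?B = "FAnd (FMem m (V m 1) t) (approx m (V m 0) (V m 1))"
  let ?G = "[FMem m (V m 0) t]"
  have w: "wffl s ?G" using Suc.prems by simp
  have ih: "pr (approx m (V m 0) (V m 0))" using Suc by simp
  have "pr (imps ?G (FAnd (FMem m (V m 0) t) (approx m (V m 0) (V m 0))))"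
    using ctx_conjI[OF ctx_hyp ctx_lift[OF ih w]] w by simp
  moreover have "subst ?B (m, 1) (V m 0) = FAnd (FMem m (V m 0) t) (approx m (V m 0) (V m 0))"
    using Suc.prems by (simp add: subst_approx)
  moreover have "freefor (V m 0) (m, 1) ?B" by (simp add: freefor_approx)
  moreover have "wff s ?B" using Suc.prems by (simp add: wff_approx)
  ultimately have "pr (imps ?G (FEx m 1 ?B))"
    using ctx_exI[of ?G ?B m 1 "V m 0"] Suc.prems by simp
  hence "pr (imps [] (FImp (FMem m (V m 0) t) (FEx m 1 ?B)))" by (rule ctx_impI)
  hence "pr (half m t t)" unfolding half_def using gen Suc.prems by simp
  thus ?case unfolding approx_Suc using ctx_conjI[of "[]"] by simp
qed

text \<open>Symmetry: \<open>\<approx>\<^sub>m\<^sub>+\<^sub>1\<close> is the conjunction of the two halves in both orders.\<close>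
lemma approx_sym: "wt a n \<Longrightarrow> wt b n \<Longrightarrow> n \<le> s \<Longrightarrow> pr (FImp (approx n a b) (approx n b a))"
proof (cases n)
  case 0
  assume w: "wt a n" "wt b n" "n \<le> s"
  obtain j where j: "(0, j) \<notin> vt a" using fresh_var[of "vt a" 0] by auto
  let ?A = "FEq 0 (V 0 j) a"
  have "pr (FImp (FEq 0 a b) (FImp (subst ?A (0, j) a) (subst ?A (0, j) b)))"
    using leibniz_ax[of a 0 b j ?A] w 0 j by (simp add: wff_subst substt_novar)
  hence 1: "pr (FImp (FEq 0 a b) (FImp (FEq 0 a a) (FEq 0 b a)))" using j by (simp add: substt_novar)
  have 2: "pr (FEq 0 a a)" using approx_refl[of a 0] w 0 by simp
  let ?G = "[FEq 0 a b]"
  have "pr (imps ?G (FEq 0 b a))"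
    using ctx_mp[OF ctx_mp[OF ctx_lift[OF 1] ctx_hyp] ctx_lift[OF 2]] w 0 by simp
  thus ?thesis using 0 by (simp add: imps.simps)
next
  case (Suc m)
  assume w: "wt a n" "wt b n" "n \<le> s"
  let ?G = "[FAnd (half m a b) (half m b a)]"
  have wg: "wffl s ?G" using w Suc by (simp add: wff_half)
  have "pr (imps ?G (FAnd (half m b a) (half m a b)))"
    using ctx_conjI[OF ctx_conjE2[OF ctx_hyp] ctx_conjE1[OF ctx_hyp]] wg by simp
  thus ?thesis using Suc by (simp add: approx_Suc imps.simps)
qed

lemma ctx_sym: "pr (imps G (approx n a b)) \<Longrightarrow> wt a n \<Longrightarrow> wt b n \<Longrightarrow> n \<le> s \<Longrightarrow> pr (imps G (approx n b a))"
  using ctx_app approx_sym by blast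

lemma half_use:
  assumes h: "pr (imps G (half m a b))" and mk: "pr (imps G (FMem m (V m k) a))"
    and k: "k \<noteq> 1" and j: "j \<noteq> 1" "j \<noteq> k" and fG: "(m, j) \<notin> \<Union> (fv ` set G)" and fC: "(m, j) \<notin> fv C"
    and c: "pr (imps (FMem m (V m j) b # approx m (V m k) (V m j) # G) C)"
    and wa: "wt a (Suc m)" and wb: "wt b (Suc m)" and sm: "Suc m \<le> s"
  shows "pr (imps G C)"
proof -
  let ?Bk = "FAnd (FMem m (V m 1) b) (approx m (V m k) (V m 1))"
  let ?Bj = "FAnd (FMem m (V m j) b) (approx m (V m k) (V m j))"
  have wG: "wffl s G" using prv_wff[OF h] by simp
  have "subst (FImp (FMem m (V m 0) a) (FEx m 1 (FAnd (FMem m (V m 1) b) (approx m (V m 0) (V m 1))))) (m, 0) (V m k)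
     = FImp (FMem m (V m k) a) (FEx m 1 ?Bk)" using wa wb by (simp add: subst_approx)
  moreover have "freefor (V m k) (m, 0) (FImp (FMem m (V m 0) a) (FEx m 1 (FAnd (FMem m (V m 1) b) (approx m (V m 0) (V m 1)))))"
    using k by (simp add: freefor_approx)
  ultimately have "pr (imps G (FImp (FMem m (V m k) a) (FEx m 1 ?Bk)))"
    using ctx_allE[of G m 0 _ "V m k"] h unfolding half_def by (metis wt.simps(1))
  hence 1: "pr (imps G (FEx m 1 ?Bk))" using ctx_mp mk by blast
  have bvB: "(m, j) \<notin> bv ?Bk" using bv_approx by fastforce
  have fvB: "(m, j) \<notin> fv ?Bk" using j wb by (auto simp: fv_approx dest: vt_type)
  have wB: "wff s ?Bk" using wb sm by (simp add: wff_approx)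
  have eq: "subst ?Bk (m, 1) (V m j) = ?Bj" using wb k by (simp add: subst_approx)
  have "pr (FImp (FEx m 1 ?Bk) (FEx m j (subst ?Bk (m, 1) (V m j))))"
    by (rule ex_rename) (use fvB bvB j wB sm in auto)
  hence "pr (FImp (FEx m 1 ?Bk) (FEx m j ?Bj))" unfolding eq .
  hence 2: "pr (imps G (FEx m j ?Bj))" using ctx_app 1 by blast
  have wBj: "wff s ?Bj" using wb sm by (simp add: wff_approx)
  have 3: "pr (imps (?Bj # G) C)"
  proof (rule ctx_cut[OF _ _ c])
    show "wffl s (?Bj # G)" using wBj wG by simp
    have h1: "pr (imps (?Bj # G) (FMem m (V m j) b))"
      using ctx_conjE1[OF ctx_hyp[of ?Bj "?Bj # G"]] wBj wG by simp
    have h2: "pr (imps (?Bj # G) (approx m (V m k) (V m j)))"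
      using ctx_conjE2[OF ctx_hyp[of ?Bj "?Bj # G"]] wBj wG by simp
    have h3: "pr (imps (?Bj # G) C)" if "C \<in> set G" for C
      using ctx_hyp[of C "?Bj # G"] wBj wG that by simp
    show "\<forall>C\<in>set (FMem m (V m j) b # approx m (V m k) (V m j) # G). pr (imps (?Bj # G) C)"
      using h1 h2 h3 by auto
  qed
  have "(m, j) \<notin> \<Union> (fv ` set G)" using fG .
  thus ?thesis using ctx_exE[OF 2 3 fC] sm by simp
qed

text \<open>One half of transitivity at type \<open>m+1\<close>, given transitivity at type \<open>m\<close>: an element of
  \<open>a\<close> is \<open>\<approx>\<^sub>m\<close> to some element of \<open>b\<close>, which is \<open>\<approx>\<^sub>m\<close> to some element of \<open>c\<close>.\<close>
lemma half_trans:
  assumes trans_m: "\<And>a b c. wt a m \<Longrightarrow> wt b m \<Longrightarrow> wt c m \<Longrightarrow>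
      pr (FImp (approx m a b) (FImp (approx m b c) (approx m a c)))"
    and w: "wt a (Suc m)" "wt b (Suc m)" "wt c (Suc m)" and sm: "Suc m \<le> s"
  shows "pr (FImp (half m a b) (FImp (half m b c) (half m a c)))"
proof -
  let ?G = "[half m a b, half m b c]"
  let ?G1 = "FMem m (V m 0) a # ?G"
  let ?Goal = "FEx m 1 (FAnd (FMem m (V m 1) c) (approx m (V m 0) (V m 1)))"
  have wG: "wffl s ?G1" using w sm by (simp add: wff_half)
  have fvG: "\<forall>j. j \<noteq> 0 \<longrightarrow> (m, j) \<notin> \<Union> (fv ` set ?G1)"
    using w by (auto simp: fv_half dest: vt_type)
  have fvGoal: "\<forall>j. j \<noteq> 0 \<longrightarrow> j \<noteq> 1 \<longrightarrow> (m, j) \<notin> fv ?Goal"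
    using w by (auto simp: fv_approx dest: vt_type)
  let ?G2 = "FMem m (V m 2) b # approx m (V m 0) (V m 2) # ?G1"
  let ?G3 = "FMem m (V m 3) c # approx m (V m 2) (V m 3) # ?G2"
  have wG3: "wffl s ?G3" using wG w sm by (simp add: wff_approx)
  have tr: "pr (imps ?G3 (approx m (V m 0) (V m 3)))"
    using ctx_app2[OF trans_m[of "V m 0" "V m 2" "V m 3"]] ctx_hyp wG3 sm by simp
  have "subst (FAnd (FMem m (V m 1) c) (approx m (V m 0) (V m 1))) (m, 1) (V m 3)
       = FAnd (FMem m (V m 3) c) (approx m (V m 0) (V m 3))" using w by (simp add: subst_approx)
  moreover have "pr (imps ?G3 (FAnd (FMem m (V m 3) c) (approx m (V m 0) (V m 3))))"
    using ctx_conjI[OF ctx_hyp tr] wG3 by simp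
  moreover have "freefor (V m 3) (m, 1) (FAnd (FMem m (V m 1) c) (approx m (V m 0) (V m 1)))"
    by (simp add: freefor_approx)
  moreover have "wff s (FAnd (FMem m (V m 1) c) (approx m (V m 0) (V m 1)))"
    using w sm by (simp add: wff_approx)
  ultimately have g3: "pr (imps ?G3 ?Goal)"
    using ctx_exI[of ?G3 _ m 1 "V m 3"] sm by simp
  have g2: "pr (imps ?G2 ?Goal)"
  proof (rule half_use[of ?G2 m b c 2 3])
    show "pr (imps ?G2 (half m b c))" using ctx_hyp wG3 by simp
    show "pr (imps ?G2 (FMem m (V m 2) b))" using ctx_hyp wG3 by simp
    show "(m, 3) \<notin> \<Union> (fv ` set ?G2)" using fvG w by (auto simp: fv_approx dest: vt_type)
    show "(m, 3) \<notin> fv ?Goal" using fvGoal by simp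
    show "pr (imps (FMem m (V m 3) c # approx m (V m 2) (V m 3) # ?G2) ?Goal)" using g3 .
  qed (use w sm in auto)
  have g1: "pr (imps ?G1 ?Goal)"
  proof (rule half_use[of ?G1 m a b 0 2])
    show "pr (imps ?G1 (half m a b))" using ctx_hyp wG by simp
    show "pr (imps ?G1 (FMem m (V m 0) a))" using ctx_hyp wG by simp
    show "(m, 2) \<notin> \<Union> (fv ` set ?G1)" using fvG by simp
    show "(m, 2) \<notin> fv ?Goal" using fvGoal by simp
    show "pr (imps (FMem m (V m 2) b # approx m (V m 0) (V m 2) # ?G1) ?Goal)" using g2 .
  qed (use w sm in auto)
  hence "pr (imps ?G (FImp (FMem m (V m 0) a) ?Goal))" by (rule ctx_impI)
  moreover have "(m, 0) \<notin> \<Union> (fv ` set ?G)" using w by (auto simp: fv_half dest: vt_type)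
  ultimately have "pr (imps ?G (half m a c))" unfolding half_def using ctx_allI sm by simp
  thus ?thesis by (simp add: imps.simps)
qed

lemma approx_trans: "wt a n \<Longrightarrow> wt b n \<Longrightarrow> wt c n \<Longrightarrow> n \<le> s \<Longrightarrow>
   pr (FImp (approx n a b) (FImp (approx n b c) (approx n a c)))"
proof (induction n arbitrary: a b c)
  case 0
  obtain j where j: "(0, j) \<notin> vt a" using fresh_var[of "vt a" 0] by auto
  let ?A = "FEq 0 a (V 0 j)"
  have "pr (FImp (FEq 0 b c) (FImp (subst ?A (0, j) b) (subst ?A (0, j) c)))"
    using leibniz_ax[of b 0 c j ?A] 0 j by (simp add: wff_subst substt_novar)
  hence 1: "pr (FImp (FEq 0 b c) (FImp (FEq 0 a b) (FEq 0 a c)))" using j by (simp add: substt_novar)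
  let ?G = "[FEq 0 b c, FEq 0 a b]"
  have wg: "wffl s ?G" using 0 by simp
  have "pr (imps ?G (FEq 0 a c))"
    using ctx_mp[OF ctx_mp[OF ctx_lift[OF 1 wg] ctx_hyp] ctx_hyp] wg by simp
  hence "pr (imps [FEq 0 a b] (FImp (FEq 0 b c) (FEq 0 a c)))" by (rule ctx_impI)
  thus ?case by (simp add: imps.simps)
next
  case (Suc m)
  have trans_m: "pr (FImp (approx m a' b') (FImp (approx m b' c') (approx m a' c')))"
    if "wt a' m" "wt b' m" "wt c' m" for a' b' c'
    using Suc.IH that Suc.prems by simp
  let ?P = "FAnd (half m a b) (half m b a)" and ?Q = "FAnd (half m b c) (half m c b)"
  let ?G = "[?P, ?Q]"
  have wG: "wffl s ?G" using Suc.prems by (simp add: wff_half)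
  have h1: "pr (imps ?G (half m a b))" using ctx_conjE1[OF ctx_hyp[of ?P ?G]] wG by simp
  have h2: "pr (imps ?G (half m b a))" using ctx_conjE2[OF ctx_hyp[of ?P ?G]] wG by simp
  have h3: "pr (imps ?G (half m b c))" using ctx_conjE1[OF ctx_hyp[of ?Q ?G]] wG by simp
  have h4: "pr (imps ?G (half m c b))" using ctx_conjE2[OF ctx_hyp[of ?Q ?G]] wG by simp
  have p1: "pr (imps ?G (half m a c))" using ctx_app2[OF half_trans[OF trans_m] h1 h3] Suc.prems by simp
  have p2: "pr (imps ?G (half m c a))" using ctx_app2[OF half_trans[OF trans_m] h4 h2] Suc.prems by simp
  have "pr (imps ?G (FAnd (half m a c) (half m c a)))" using ctx_conjI[OF p1 p2] .
  thus ?case by (simp add: imps.simps approx_Suc)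
qed

lemma ctx_trans: "pr (imps G (approx n a b)) \<Longrightarrow> pr (imps G (approx n b c)) \<Longrightarrow> wt a n \<Longrightarrow> wt b n \<Longrightarrow> wt c n \<Longrightarrow> n \<le> s \<Longrightarrow>
   pr (imps G (approx n a c))"
  using ctx_app2 approx_trans by blast

section \<open>The translation respects \<open>\<approx>\<^sub>n\<close>\<close>

lemma mb_E1: "pr (imps G (mb m k a v)) \<Longrightarrow> pr (imps G (FMem m (V m k) v))"
  unfolding mb_def by (rule ctx_conjE1)

lemma mb_E2: "pr (imps G (mb m k a v)) \<Longrightarrow> pr (imps G (approx m (V m k) a))"
  unfolding mb_def by (rule ctx_conjE2)

lemma mb_I: "pr (imps G (FMem m (V m k) v)) \<Longrightarrow> pr (imps G (approx m (V m k) a)) \<Longrightarrow> pr (imps G (mb m k a v))"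
  unfolding mb_def by (rule ctx_conjI)

lemma ctx_approx_half: "pr (imps G (approx (Suc m) a b)) \<Longrightarrow> pr (imps G (half m a b))"
  unfolding approx_Suc by (rule ctx_conjE1)

lemma mem_rename:
  assumes "(m, k1) \<notin> vt a" "(m, k2) \<notin> vt a" "wt a m" "wt v (Suc m)" "Suc m \<le> s"
  shows "pr (FImp (FEx m k1 (mb m k1 a v)) (FEx m k2 (mb m k2 a v)))"
proof (cases "k1 = k2")
  case True thus ?thesis using imp_refl assms by (simp add: wff_mb)
next
  case False
  have "pr (FImp (FEx m k1 (mb m k1 a v)) (FEx m k2 (subst (mb m k1 a v) (m, k1) (V m k2))))"
    by (rule ex_rename) (use assms False in \<open>auto simp: fv_mb bv_mb wff_mb dest: vt_type\<close>)
  thus ?thesis using subst_mb assms by simp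
qed

lemma star_mem_intro:
  assumes "pr (imps G (FMem m (V m j) v))" "pr (imps G (approx m (V m j) a))"
    and w: "wt a m" "wt v (Suc m)" "Suc m \<le> s"
  shows "pr (imps G (star (FMem m a v)))"
proof -
  let ?k = "Suc (maxidx a)"
  have "pr (imps G (mb m j a v))" using mb_I assms(1,2) .
  hence "pr (imps G (FEx m ?k (mb m ?k a v)))"
    using ctx_exI[of G "mb m ?k a v" m ?k "V m j"] subst_mb[of m ?k a v j] freefor_mb w
    by (simp add: wff_mb)
  thus ?thesis by (simp only: star_FMem)
qed

lemma star_mem_elim:
  assumes h: "pr (imps G (star (FMem m a v)))"
    and c: "pr (imps (mb m k a v # G) C)"
    and k: "(m, k) \<notin> vt a" "(m, k) \<notin> fv C" "(m, k) \<notin> \<Union> (fv ` set G)"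
    and w: "wt a m" "wt v (Suc m)" "Suc m \<le> s"
  shows "pr (imps G C)"
proof -
  have "pr (imps G (FEx m (Suc (maxidx a)) (mb m (Suc (maxidx a)) a v)))"
    using h by (simp add: star_FMem)
  hence "pr (imps G (FEx m k (mb m k a v)))"
    using ctx_app[OF mem_rename[OF maxidx_fresh k(1) w]] by simp
  thus ?thesis using ctx_exE[OF _ c k(2,3)] w(3) by simp
qed

lemma memcong_elem:
  assumes wa: "wt a m" and wb: "wt b m" and wv: "wt v (Suc m)" and sm: "Suc m \<le> s"
  shows "pr (FImp (approx m a b) (FImp (star (FMem m a v)) (star (FMem m b v))))"
proof -
  define k where "k = Suc (max (maxidx a) (maxidx b))"
  have ka: "(m, k) \<notin> vt a" and kb: "(m, k) \<notin> vt b" unfolding k_def using vt_maxidx by fastforce+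
  let ?G = "[approx m a b, star (FMem m a v)]"
  let ?G' = "mb m k a v # ?G"
  have wG': "wffl s ?G'" using wa wb wv sm by (simp add: wff_approx wff_star_mem wff_mb)
  have h: "pr (imps ?G' (mb m k a v))" using ctx_hyp[of _ ?G'] wG' by simp
  have "pr (imps ?G' (approx m (V m k) b))"
    using ctx_trans[OF mb_E2[OF h] ctx_hyp[of "approx m a b" ?G']] wG' wa wb sm by simp
  hence "pr (imps ?G' (star (FMem m b v)))" using star_mem_intro[OF mb_E1[OF h]] wb wv sm by simp
  moreover have "(m, k) \<notin> fv (star (FMem m b v))" using kb wb wv by (auto simp: fv_star_mem dest: vt_type)
  moreover have "(m, k) \<notin> \<Union> (fv ` set ?G)" using ka kb wa wb wv
    by (auto simp: fv_star_mem fv_approx dest: vt_type)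
  ultimately have "pr (imps ?G (star (FMem m b v)))"
    using star_mem_elim[OF ctx_hyp[of "star (FMem m a v)" ?G]] ka wG' wa wv sm by simp
  thus ?thesis by (simp add: imps2)
qed

text \<open>Translated membership respects \<open>\<approx>\<^sub>m\<^sub>+\<^sub>1\<close> in the set: a witness \<open>x\<^sub>k \<in> v\<close> with
  \<open>x\<^sub>k \<approx> a\<close> yields, by \<open>v \<approx> w\<close>, some \<open>x\<^sub>j \<in> w\<close> with \<open>x\<^sub>k \<approx> x\<^sub>j\<close>, hence \<open>x\<^sub>j \<approx> a\<close>.\<close>
lemma memcong_set:
  assumes wa: "wt a m" and wv: "wt v (Suc m)" and ww: "wt w (Suc m)" and sm: "Suc m \<le> s"
  shows "pr (FImp (approx (Suc m) v w) (FImp (star (FMem m a v)) (star (FMem m a w))))"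
proof -
  define k where "k = Suc (Suc (maxidx a))"
  define j where "j = Suc k"
  have ka: "(m, k) \<notin> vt a" and ja: "(m, j) \<notin> vt a" unfolding k_def j_def using vt_maxidx by fastforce+
  have kj: "k \<noteq> 1" "j \<noteq> 1" "j \<noteq> k" unfolding k_def j_def by auto
  let ?G = "[approx (Suc m) v w, star (FMem m a v)]"
  let ?G' = "mb m k a v # ?G"
  have wG': "wffl s ?G'" using wa wv ww sm by (simp add: wff_approx wff_star_mem wff_mb)
  have h: "pr (imps ?G' (mb m k a v))" using ctx_hyp[of _ ?G'] wG' by simp
  have hw: "pr (imps ?G' (half m v w))"
    using ctx_approx_half[OF ctx_hyp[of "approx (Suc m) v w" ?G']] wG' by simp
  let ?G'' = "FMem m (V m j) w # approx m (V m k) (V m j) # ?G'"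
  have wG'': "wffl s ?G''" using wG' ww sm by (simp add: wff_approx)
  have "pr (imps ?G'' (approx m (V m j) (V m k)))"
    using ctx_sym[OF ctx_hyp[of "approx m (V m k) (V m j)" ?G'']] wG'' sm by simp
  moreover have "pr (imps ?G'' (approx m (V m k) a))"
    using ctx_weaken[OF mb_E2[OF h], of ?G''] wG'' by auto
  ultimately have "pr (imps ?G'' (approx m (V m j) a))" using ctx_trans wa sm by simp
  hence 3: "pr (imps ?G'' (star (FMem m a w)))"
    using star_mem_intro[OF ctx_hyp[of "FMem m (V m j) w" ?G'']] wG'' wa ww sm by simp
  have fG': "(m, j) \<notin> \<Union> (fv ` set ?G')" using ja kj wa wv ww
    by (auto simp: fv_star_mem fv_approx fv_mb dest: vt_type)
  have fC: "\<And>i. (m, i) \<notin> vt a \<Longrightarrow> (m, i) \<notin> fv (star (FMem m a w))"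
    using wa ww by (auto simp: fv_star_mem dest: vt_type)
  have "pr (imps ?G' (star (FMem m a w)))"
    by (rule half_use[OF hw mb_E1[OF h] kj fG' fC[OF ja] 3 wv ww sm])
  moreover have "(m, k) \<notin> \<Union> (fv ` set ?G)" using ka wa wv ww
    by (auto simp: fv_star_mem fv_approx dest: vt_type)
  ultimately have "pr (imps ?G (star (FMem m a w)))"
    using star_mem_elim[OF ctx_hyp[of "star (FMem m a v)" ?G]] ka fC[OF ka] wG' wa wv sm by simp
  thus ?thesis by (simp add: imps2)
qed

text \<open>For positive
  types the term is the variable itself; at type 0, \<open>\<approx>\<^sub>0\<close> is equality and the Leibniz axiom applies.\<close>
lemma approx_substt_cong:
  assumes wu: "wt u m" and wt: "wt t n" and wr: "wt r n" and ms: "m \<le> s" and ns: "n \<le> s"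
  shows "pr (FImp (approx n t r) (approx m (substt u (n, i) t) (substt u (n, i) r)))"
proof (cases "(n, i) \<in> vt u")
  case False
  hence "substt u (n, i) t = u" "substt u (n, i) r = u" using substt_novar by auto
  thus ?thesis using K_intro[OF approx_refl[OF wu ms]] wt wr ns by (simp add: wff_approx)
next
  case True
  hence mn: "m = n" using vt_type wu by blast
  show ?thesis
  proof (cases n)
    case (Suc n')
    then obtain i' where "u = V n i'" using wt_Suc wu mn by blast
    hence "u = V n i" using True by simp
    thus ?thesis using imp_refl wt wr ns mn by (simp add: wff_approx)
  next
    case 0
    obtain j where j: "(0, j) \<notin> vt u \<union> vt t \<union> vt r \<union> {(n, i)}"
      using fresh_var[of "vt u \<union> vt t \<union> vt r \<union> {(n, i)}" 0] by auto
    let ?ut = "substt u (n, i) t" and ?ur = "substt u (n, i) r"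
    let ?A = "FEq 0 ?ut (substt u (n, i) (V 0 j))"
    have j1: "(0, j) \<notin> vt ?ut" "(0, j) \<notin> vt ?ur" using j vt_substt[of u "(n,i)" t] vt_substt[of u "(n,i)" r] by auto
    have e1: "subst ?A (0, j) t = FEq 0 ?ut ?ut" using j j1 by (simp add: substt_novar substt_twice)
    have e2: "subst ?A (0, j) r = FEq 0 ?ut ?ur" using j j1 by (simp add: substt_novar substt_twice)
    have wut: "wt ?ut 0" "wt ?ur 0" using substt_wt wu wt wr mn 0 by auto
    have "pr (FImp (FEq 0 t r) (FImp (subst ?A (0, j) t) (subst ?A (0, j) r)))"
      by (rule leibniz_ax) (use wt wr 0 e1 e2 wut in auto)
    hence 1: "pr (FImp (FEq 0 t r) (FImp (FEq 0 ?ut ?ut) (FEq 0 ?ut ?ur)))" using e1 e2 by simp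
    have 2: "pr (FEq 0 ?ut ?ut)" using approx_refl[OF wut(1)] by simp
    have "pr (imps [FEq 0 t r] (FEq 0 ?ut ?ur))"
      using ctx_mp[OF ctx_mp[OF ctx_lift[OF 1] ctx_hyp[of "FEq 0 t r"]] ctx_lift[OF 2]] wt wr 0 by simp
    thus ?thesis using 0 mn by (simp add: imps1)
  qed
qed

lemma star_approx_cong_nofv:
  assumes "wff s A" "wt t n" "wt r n" "n \<le> s" "(n, i) \<notin> fv A"
  shows "pr (FImp (approx n t r) (FImp (star (subst A (n, i) t)) (star (subst A (n, i) r))))"
  using K_intro[OF imp_refl[OF wff_star]] assms by (simp add: subst_nofv wff_approx)


lemma eq_subst_cong:
  assumes w: "wt u m" "wt v m" "m \<le> s" and wtr: "wt t n" "wt r n" "n \<le> s"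
  shows "pr (FImp (approx n t r) (FImp (approx m (substt u (n, i) t) (substt v (n, i) t))
                                       (approx m (substt u (n, i) r) (substt v (n, i) r))))"
proof -
  let ?u1 = "substt u (n, i) t" and ?u2 = "substt u (n, i) r"
  let ?v1 = "substt v (n, i) t" and ?v2 = "substt v (n, i) r"
  have w2: "wt ?u1 m" "wt ?u2 m" "wt ?v1 m" "wt ?v2 m" using substt_wt w wtr by auto
  let ?G = "[approx n t r, approx m ?u1 ?v1]"
  have wG: "wffl s ?G" using w w2 wtr by (simp add: wff_approx)
  have h1: "pr (imps ?G (approx n t r))" using ctx_hyp[of _ ?G] wG by simp
  have h2: "pr (imps ?G (approx m ?u1 ?v1))" using ctx_hyp[of _ ?G] wG by simp
  have cu: "pr (imps ?G (approx m ?u1 ?u2))" using ctx_app[OF approx_substt_cong[OF w(1) wtr(1,2) w(3) wtr(3)] h1] .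
  have cv: "pr (imps ?G (approx m ?v1 ?v2))" using ctx_app[OF approx_substt_cong[OF w(2) wtr(1,2) w(3) wtr(3)] h1] .
  have "pr (imps ?G (approx m ?u2 ?v1))" using ctx_trans[OF ctx_sym[OF cu] h2] w2 w by simp
  hence "pr (imps ?G (approx m ?u2 ?v2))" using ctx_trans[OF _ cv] w2 w by simp
  thus ?thesis by (simp add: imps2)
qed

lemma mem_subst_cong:
  assumes w: "wt u m" "wt v (Suc m)" "Suc m \<le> s" and wtr: "wt t n" "wt r n" "n \<le> s"
  shows "pr (FImp (approx n t r) (FImp (star (FMem m (substt u (n, i) t) (substt v (n, i) t)))
                                       (star (FMem m (substt u (n, i) r) (substt v (n, i) r)))))"
proof -
  let ?u1 = "substt u (n, i) t" and ?u2 = "substt u (n, i) r"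
  let ?v1 = "substt v (n, i) t" and ?v2 = "substt v (n, i) r"
  have w2: "wt ?u1 m" "wt ?u2 m" "wt ?v1 (Suc m)" "wt ?v2 (Suc m)" using substt_wt w wtr by auto
  let ?G = "[approx n t r, star (FMem m ?u1 ?v1)]"
  have wG: "wffl s ?G" using w w2 wtr by (simp add: wff_approx wff_star_mem)
  have h1: "pr (imps ?G (approx n t r))" using ctx_hyp[of _ ?G] wG by simp
  have h2: "pr (imps ?G (star (FMem m ?u1 ?v1)))" using ctx_hyp[of _ ?G] wG by simp
  have cu: "pr (imps ?G (approx m ?u1 ?u2))"
    using ctx_app[OF approx_substt_cong[OF w(1) wtr(1,2) _ wtr(3)] h1] w by simp
  have cv: "pr (imps ?G (approx (Suc m) ?v1 ?v2))"
    using ctx_app[OF approx_substt_cong[OF w(2) wtr(1,2) w(3) wtr(3)] h1] .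
  have "pr (imps ?G (star (FMem m ?u2 ?v1)))" using ctx_app2[OF memcong_elem[OF w2(1,2,3) w(3)] cu h2] .
  hence "pr (imps ?G (star (FMem m ?u2 ?v2)))" using ctx_app2[OF memcong_set[OF w2(2,3,4) w(3)] cv] by simp
  thus ?thesis by (simp add: imps2)
qed

text \<open>The
  compound cases follow from monotonicity of the connectives under the hypothesis
  \<open>t \<approx>\<^sub>n r\<close>; for an implication the induction hypothesis is used with \<open>t\<close> and \<open>r\<close>
  exchanged, together with symmetry of \<open>\<approx>\<^sub>n\<close>.\<close>
lemma star_approx_cong:
  "wff s A \<Longrightarrow> wt t n \<Longrightarrow> wt r n \<Longrightarrow> n \<le> s \<Longrightarrow> freefor t (n, i) A \<Longrightarrow> freefor r (n, i) A \<Longrightarrow>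
   pr (FImp (approx n t r) (FImp (star (subst A (n, i) t)) (star (subst A (n, i) r))))"
proof (induction A arbitrary: t r)
  case FBot show ?case by (rule star_approx_cong_nofv) (use FBot.prems in auto)
next
  case (FEq m u v) thus ?case using eq_subst_cong by simp
next
  case (FMem m u v) thus ?case using mem_subst_cong by simp
next
  case (FAnd A B) thus ?case using hyp_and_mono by simp
next
  case (FOr A B) thus ?case using hyp_or_mono by simp
next
  case (FImp A B)
  have "pr (FImp (approx n t r) (FImp (star (subst A (n, i) r)) (star (subst A (n, i) t))))"
    using syl[OF approx_sym FImp.IH(1)[of r t]] FImp.prems by simp
  thus ?case using hyp_imp_mono FImp by simp
next
  case (FAll k j B)
  show ?case
  proof (cases "(k, j) = (n, i) \<or> (n, i) \<notin> fv B")
    case True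
    hence "(n, i) \<notin> fv (FAll k j B)" by auto
    thus ?thesis using star_approx_cong_nofv FAll.prems by blast
  next
    case False
    hence "(k, j) \<notin> fv (approx n t r)" "freefor t (n, i) B" "freefor r (n, i) B"
      using FAll.prems by (auto simp: fv_approx)
    thus ?thesis using hyp_all_mono[OF FAll.IH] False FAll.prems by auto
  qed
next
  case (FEx k j B)
  show ?case
  proof (cases "(k, j) = (n, i) \<or> (n, i) \<notin> fv B")
    case True
    hence "(n, i) \<notin> fv (FEx k j B)" by auto
    thus ?thesis using star_approx_cong_nofv FEx.prems by blast
  next
    case False
    hence "(k, j) \<notin> fv (approx n t r)" "freefor t (n, i) B" "freefor r (n, i) B"
      using FEx.prems by (auto simp: fv_approx)
    thus ?thesis using hyp_ex_mono[OF FEx.IH] False FEx.prems by auto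
  qed
qed

section \<open>Translation commutes with substitution\<close>

text \<open>For an equation the translation commutes with substitution exactly, since the
  bound variables of \<open>\<approx>\<^sub>m\<close> have types below \<open>m\<close>.\<close>
lemma star_subst_FEq:
  assumes "wt u m" "wt v m"
  shows "star (subst (FEq m u v) (n, i) t) = subst (star (FEq m u v)) (n, i) t"
proof (cases "(n, i) \<in> vt u \<union> vt v")
  case True
  hence "m \<le> fst (n, i)" using assms vt_type by auto
  thus ?thesis by (simp add: subst_approx)
next
  case False
  hence "(n, i) \<notin> fv (approx m u v)" using assms by (simp add: fv_approx)
  thus ?thesis using False by (simp add: subst_nofv substt_novar)
qed

text \<open>For a membership the two sides differ only in the name of the bound witness, which
  the translation chooses from the term it is applied to.\<close>
lemma star_subst_FMem:
  assumes w: "wt u m" "wt v (Suc m)" "Suc m \<le> s" and wt: "wt t n"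
    and x: "(n, i) \<in> vt u \<union> vt v" and ff: "freefor t (n, i) (star (FMem m u v))"
  shows "prv_equiv (star (subst (FMem m u v) (n, i) t)) (subst (star (FMem m u v)) (n, i) t)"
proof -
  let ?k = "Suc (maxidx u)"
  have mx: "m \<le> fst (n, i)" using x w vt_type by fastforce
  have kx: "(m, ?k) \<noteq> (n, i)" using x w vt_type maxidx_fresh by fastforce
  have xin: "(n, i) \<in> fv (mb m ?k u v)" using x w by (auto simp: fv_mb)
  hence kt: "(m, ?k) \<notin> vt t" using ff kx by (auto simp: star_FMem)
  let ?u' = "substt u (n, i) t" and ?v' = "substt v (n, i) t"
  have w': "wt ?u' m" "wt ?v' (Suc m)" using substt_wt w wt by auto
  have e1: "subst (star (FMem m u v)) (n, i) t = FEx m ?k (mb m ?k ?u' ?v')"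
    using kx mx by (auto simp: star_FMem subst_mb_gen)
  have e2: "star (subst (FMem m u v) (n, i) t) = FEx m (Suc (maxidx ?u')) (mb m (Suc (maxidx ?u')) ?u' ?v')"
    by (simp add: star_FMem)
  have ku: "(m, ?k) \<notin> vt ?u'" using vt_substt[of u "(n, i)" t] kt maxidx_fresh by blast
  show ?thesis unfolding e1 e2 prv_equiv_def
    using mem_rename[OF maxidx_fresh ku w'(1,2) w(3)] mem_rename[OF ku maxidx_fresh w'(1,2) w(3)] by simp
qed

lemma star_subst_nofv:
  "wff s A \<Longrightarrow> (n, i) \<notin> fv A \<Longrightarrow> prv_equiv (star (subst A (n, i) t)) (subst (star A) (n, i) t)"
  by (simp add: subst_nofv fv_star prv_equiv_refl wff_star)

lemma star_subst_equiv:
  "wff s A \<Longrightarrow> wt t n \<Longrightarrow> n \<le> s \<Longrightarrow> freefor t (n, i) (star A) \<Longrightarrow>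
   prv_equiv (star (subst A (n, i) t)) (subst (star A) (n, i) t)"
proof (induction A)
  case FBot thus ?case using prv_equiv_refl by simp
next
  case (FEq m u v)
  have "star (subst (FEq m u v) (n, i) t) = subst (star (FEq m u v)) (n, i) t"
    using star_subst_FEq FEq.prems by simp
  moreover have "wff s (star (subst (FEq m u v) (n, i) t))" using FEq.prems by (simp add: wff_approx substt_wt)
  ultimately show ?case using prv_equiv_refl by metis
next
  case (FMem m u v)
  show ?case
  proof (cases "(n, i) \<in> vt u \<union> vt v")
    case False
    show ?thesis by (rule star_subst_nofv) (use FMem.prems False in auto)
  next
    case True thus ?thesis using star_subst_FMem FMem.prems by simp
  qed
next
  case (FAnd A B) thus ?case using prv_equiv_conn(1) by simp
next
  case (FOr A B) thus ?case using prv_equiv_conn(2) by simp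
next
  case (FImp A B) thus ?case using prv_equiv_conn(3) by simp
next
  case (FAll k j B)
  show ?case
  proof (cases "(k, j) = (n, i) \<or> (n, i) \<notin> fv B")
    case True
    hence "(n, i) \<notin> fv (FAll k j B)" by auto
    thus ?thesis using star_subst_nofv FAll.prems(1) by blast
  next
    case False
    hence c: "freefor t (n, i) (star B)" "(k, j) \<noteq> (n, i)" using fv_star FAll.prems by auto
    hence "prv_equiv (star (subst B (n, i) t)) (subst (star B) (n, i) t)" using FAll by simp
    hence "prv_equiv (FAll k j (star (subst B (n, i) t))) (FAll k j (subst (star B) (n, i) t))"
      using prv_equiv_quant(1) FAll.prems by simp
    thus ?thesis using c(2) by auto
  qed
next
  case (FEx k j B)
  show ?case
  proof (cases "(k, j) = (n, i) \<or> (n, i) \<notin> fv B")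
    case True
    hence "(n, i) \<notin> fv (FEx k j B)" by auto
    thus ?thesis using star_subst_nofv FEx.prems(1) by blast
  next
    case False
    hence c: "freefor t (n, i) (star B)" "(k, j) \<noteq> (n, i)" using fv_star FEx.prems by auto
    hence "prv_equiv (star (subst B (n, i) t)) (subst (star B) (n, i) t)" using FEx by simp
    hence "prv_equiv (FEx k j (star (subst B (n, i) t))) (FEx k j (subst (star B) (n, i) t))"
      using prv_equiv_quant(2) FEx.prems by simp
    thus ?thesis using c(2) by auto
  qed
qed

lemma star_subst_to:
  "wff s A \<Longrightarrow> wt t n \<Longrightarrow> n \<le> s \<Longrightarrow> freefor t (n, i) (star A) \<Longrightarrow>
   pr (FImp (star (subst A (n, i) t)) (subst (star A) (n, i) t))"
  using star_subst_equiv by (simp add: prv_equiv_def)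

lemma star_subst_from:
  "wff s A \<Longrightarrow> wt t n \<Longrightarrow> n \<le> s \<Longrightarrow> freefor t (n, i) (star A) \<Longrightarrow>
   pr (FImp (subst (star A) (n, i) t) (star (subst A (n, i) t)))"
  using star_subst_equiv by (simp add: prv_equiv_def)

section \<open>Translated logical axioms\<close>

text \<open>Every term is \<open>\<approx>\<^sub>n\<close> to some variable of type \<open>n\<close>: instantiate by the term itself.\<close>
lemma ex_approx_witness:
  assumes wt: "wt t n" and ns: "n \<le> s" and j: "(n, j) \<notin> vt t" and wG: "wffl s G"
  shows "pr (imps G (FEx n j (approx n (V n j) t)))"
proof -
  have "subst (approx n (V n j) t) (n, j) t = approx n t t" using j by (simp add: subst_approx substt_novar)
  moreover have "pr (imps G (approx n t t))" using ctx_lift[OF approx_refl[OF wt ns] wG] .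
  moreover have "freefor t (n, j) (approx n (V n j) t)" using freefor_approx vt_type_le[OF wt] by simp
  moreover have "wff s (approx n (V n j) t)" using wt ns by (simp add: wff_approx)
  ultimately show ?thesis using ctx_exI[of G "approx n (V n j) t" n j t] wt ns by simp
qed

text \<open>Translated \<open>\<forall>\<close>-instantiation: for a fresh \<open>y \<approx>\<^sub>n t\<close>, instantiate \<open>\<forall>x A\<^sup>*\<close> at the
  variable \<open>y\<close> (always substitutable), commute \<open>*\<close> with the substitution, and move from
  \<open>y\<close> to \<open>t\<close> by the translated Leibniz law.\<close>
lemma star_all_inst:
  assumes wA: "wff s A" and wt: "wt t n" and ns: "n \<le> s" and ff: "freefor t (n, i) A"
  shows "pr (FImp (FAll n i (star A)) (star (subst A (n, i) t)))"
proof -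
  obtain j where j: "(n, j) \<notin> fv A \<union> bv A \<union> bv (star A) \<union> vt t \<union> {(n, i)}"
    using fresh_var[of "fv A \<union> bv A \<union> bv (star A) \<union> vt t \<union> {(n, i)}" n] by auto
  let ?G0 = "[FAll n i (star A)]"
  have wG0: "wffl s ?G0" using wA ns wff_star by simp
  have E: "pr (imps ?G0 (FEx n j (approx n (V n j) t)))" using ex_approx_witness wt ns j wG0 by simp
  let ?G1 = "approx n (V n j) t # ?G0"
  have wG1: "wffl s ?G1" using wG0 wt ns by (simp add: wff_approx)
  have h1: "pr (imps ?G1 (approx n (V n j) t))" using ctx_hyp[of _ ?G1] wG1 by simp
  have ffy: "freefor (V n j) (n, i) (star A)" using freefor_nobv j by simp
  have ffyA: "freefor (V n j) (n, i) A" using freefor_nobv j by simp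
  have h2: "pr (imps ?G1 (subst (star A) (n, i) (V n j)))"
    using ctx_allE[OF ctx_hyp[of "FAll n i (star A)" ?G1] _ ffy] wG1 by simp
  have h3: "pr (imps ?G1 (star (subst A (n, i) (V n j))))"
    using ctx_app[OF star_subst_from[OF wA _ ns ffy] h2] by simp
  have h4: "pr (imps ?G1 (star (subst A (n, i) t)))"
    using ctx_app2[OF star_approx_cong[OF wA _ wt ns ffyA ff] h1 h3] by simp
  have "fv (star (subst A (n, i) t)) \<subseteq> (fv A - {(n, i)}) \<union> vt t"
    using fv_star[OF wff_subst[OF wA, of t "(n, i)"]] fv_subst[of A "(n, i)" t] wt by simp
  hence f1: "(n, j) \<notin> fv (star (subst A (n, i) t))" using j by blast
  have f2: "(n, j) \<notin> \<Union> (fv ` set ?G0)" using j fv_star[OF wA] by simp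
  have "pr (imps ?G0 (star (subst A (n, i) t)))" using ctx_exE[OF E h4 f1 f2 ns] .
  thus ?thesis by (simp add: imps1)
qed

lemma star_ex_intro:
  assumes wA: "wff s A" and wt: "wt t n" and ns: "n \<le> s" and ff: "freefor t (n, i) A"
  shows "pr (FImp (star (subst A (n, i) t)) (FEx n i (star A)))"
proof -
  obtain j where j: "(n, j) \<notin> fv A \<union> bv A \<union> bv (star A) \<union> vt t \<union> {(n, i)}"
    using fresh_var[of "fv A \<union> bv A \<union> bv (star A) \<union> vt t \<union> {(n, i)}" n] by auto
  have wS: "wff s (star (subst A (n, i) t))" using wff_star wff_subst wA wt by simp
  let ?G0 = "[star (subst A (n, i) t)]"
  have wG0: "wffl s ?G0" using wS by simp
  have E: "pr (imps ?G0 (FEx n j (approx n (V n j) t)))" using ex_approx_witness wt ns j wG0 by simp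
  let ?G1 = "approx n (V n j) t # ?G0"
  have wG1: "wffl s ?G1" using wG0 wt ns by (simp add: wff_approx)
  have h1: "pr (imps ?G1 (approx n t (V n j)))" using ctx_sym[OF ctx_hyp[of _ ?G1]] wG1 wt ns by simp
  have h0: "pr (imps ?G1 (star (subst A (n, i) t)))" using ctx_hyp[of _ ?G1] wG1 by simp
  have ffy: "freefor (V n j) (n, i) (star A)" using freefor_nobv j by simp
  have ffyA: "freefor (V n j) (n, i) A" using freefor_nobv j by simp
  have h3: "pr (imps ?G1 (star (subst A (n, i) (V n j))))"
    using ctx_app2[OF star_approx_cong[OF wA wt _ ns ff ffyA] h1 h0] by simp
  have h4: "pr (imps ?G1 (subst (star A) (n, i) (V n j)))"
    using ctx_app[OF star_subst_to[OF wA _ ns ffy] h3] by simp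
  have h5: "pr (imps ?G1 (FEx n i (star A)))"
    using ctx_exI[OF h4 _ ffy ns] wff_star[OF wA] by simp
  have f1: "(n, j) \<notin> fv (FEx n i (star A))" using j fv_star[OF wA] by simp
  have "fv (star (subst A (n, i) t)) \<subseteq> (fv A - {(n, i)}) \<union> vt t"
    using fv_star[OF wff_subst[OF wA, of t "(n, i)"]] fv_subst[of A "(n, i)" t] wt by simp
  hence f2: "(n, j) \<notin> \<Union> (fv ` set ?G0)" using j by auto
  have "pr (imps ?G0 (FEx n i (star A)))" using ctx_exE[OF E h5 f1 f2 ns] .
  thus ?thesis by (simp add: imps1)
qed

text \<open>Every translated logical axiom is derivable: the propositional axioms translate into
  axioms, the quantifier axioms are handled above, and the equality axioms become
  reflexivity of \<open>\<approx>\<^sub>n\<close> and the translated Leibniz law.\<close>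
lemma star_logax: "logax A \<Longrightarrow> wff s A \<Longrightarrow> pr (star A)"
proof (induction rule: logax.induct)
  case (10 A)
  have l: "logax (FImp (FNeg (FNeg (star A))) (star A))" by (rule logax.intros)
  have "wff s (FImp (FNeg (FNeg (star A))) (star A))" using 10 by (simp add: FNeg_def wff_star)
  hence "pr (FImp (FNeg (FNeg (star A))) (star A))" using prv.lax[OF l] by simp
  thus ?case by (simp add: FNeg_def)
next
  case (11 t n i A)
  thus ?case using star_all_inst by simp
next
  case (12 t n i A)
  thus ?case using star_ex_intro by simp
next
  case (13 t n)
  thus ?case using approx_refl by simp
next
  case (14 t n r i A)
  hence "wff s A" using wff_subst_rev[of t "(n, i)" s A] by simp
  thus ?case using star_approx_cong 14 by simp
qed (intro prv.lax, auto intro: logax.intros simp: wff_star)+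

section \<open>Translated axioms of \<open>TI\<^sub>s\<close>\<close>

text \<open>The translation of an induction axiom follows from the induction axiom for \<open>A\<^sup>*\<close>,
  since translation commutes with substituting \<open>0\<close> and \<open>S x\<close> up to provable equivalence.\<close>
lemma star_ind_ax:
  assumes w: "wff s (FImp (FAnd (subst A (0, i) Zr) (FAll 0 i (FImp A (subst A (0, i) (Sc (V 0 i)))))) (FAll 0 i A))"
  shows "pr (star (FImp (FAnd (subst A (0, i) Zr) (FAll 0 i (FImp A (subst A (0, i) (Sc (V 0 i)))))) (FAll 0 i A)))"
proof -
  have wA: "wff s A" using w by simp
  have wsA: "wff s (star A)" using wff_star[OF wA] .
  let ?T = "FImp (FAnd (subst (star A) (0, i) Zr) (FAll 0 i (FImp (star A) (subst (star A) (0, i) (Sc (V 0 i))))))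
                 (FAll 0 i (star A))"
  have T: "pr ?T" by (rule prv.nax) (use wsA in \<open>auto intro: tiax.ind simp: wff_subst\<close>)
  have s1: "pr (FImp (star (subst A (0, i) Zr)) (subst (star A) (0, i) Zr))"
    using star_subst_to[OF wA _ _ freefor_Zr] by simp
  have s2: "pr (FImp (star (subst A (0, i) (Sc (V 0 i)))) (subst (star A) (0, i) (Sc (V 0 i))))"
    using star_subst_to[OF wA _ _ freefor_ScV] by simp
  have "pr (FImp (FImp (star A) (star (subst A (0, i) (Sc (V 0 i))))) (FImp (star A) (subst (star A) (0, i) (Sc (V 0 i)))))"
    using imp_mono[OF imp_refl[OF wsA] s2] .
  hence "pr (FImp (FAll 0 i (FImp (star A) (star (subst A (0, i) (Sc (V 0 i))))))
                   (FAll 0 i (FImp (star A) (subst (star A) (0, i) (Sc (V 0 i))))))"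
    using all_mono by simp
  hence c: "pr (FImp (FAnd (star (subst A (0, i) Zr)) (FAll 0 i (FImp (star A) (star (subst A (0, i) (Sc (V 0 i)))))))
                (FAnd (subst (star A) (0, i) Zr) (FAll 0 i (FImp (star A) (subst (star A) (0, i) (Sc (V 0 i)))))))"
    using and_mono[OF s1] by simp
  show ?thesis using syl[OF c T] by simp
qed

text \<open>Under the comprehension hypothesis \<open>\<forall>z (z \<in> X \<equiv> A\<^sup>*)\<close>, translated membership
  \<open>(z \<in> X)\<^sup>*\<close> implies \<open>A\<^sup>*\<close>: a witness \<open>w \<in> X\<close> with \<open>w \<approx> z\<close> satisfies \<open>A\<^sup>*[w/z]\<close>, which is
  equivalent to \<open>(A[w/z])\<^sup>*\<close>, and the translated Leibniz law carries this over to \<open>A\<^sup>*\<close>.\<close>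
lemma compr_star_mem_to:
  assumes wA: "wff s A" and sn: "Suc n \<le> s"
  shows "pr (imps [FAll n k (FIff (FMem n (V n k) (V (Suc n) i)) (star A))]
                  (FImp (star (FMem n (V n k) (V (Suc n) i))) (star A)))"
proof -
  let ?X = "V (Suc n) i" and ?z = "V n k"
  let ?P = "FAll n k (FIff (FMem n ?z ?X) (star A))"
  let ?SM = "star (FMem n ?z ?X)"
  obtain w where wf: "(n, w) \<notin> fv A \<union> bv A \<union> bv (star A) \<union> {(n, k)}"
    using fresh_var[of "fv A \<union> bv A \<union> bv (star A) \<union> {(n, k)}" n] by auto
  let ?Ga = "[?SM, ?P]"
  let ?Gw = "mb n w ?z ?X # ?Ga"
  have wGw: "wffl s ?Gw" using wA sn by (simp add: wff_mb wff_star wff_star_mem FIff_def)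
  have hm: "pr (imps ?Gw (mb n w ?z ?X))" using ctx_hyp[of _ ?Gw] wGw by simp
  have ffw: "freefor (V n w) (n, k) (FIff (FMem n ?z ?X) (star A))"
    using freefor_nobv wf by (simp add: FIff_def)
  have "pr (imps ?Gw (subst (FIff (FMem n ?z ?X) (star A)) (n, k) (V n w)))"
    using ctx_allE[OF ctx_hyp[of ?P ?Gw] _ ffw] wGw by simp
  hence "pr (imps ?Gw (FIff (FMem n (V n w) ?X) (subst (star A) (n, k) (V n w))))"
    by (simp add: subst_FIff)
  hence "pr (imps ?Gw (subst (star A) (n, k) (V n w)))"
    using ctx_mp[OF iff_E1 mb_E1[OF hm]] by blast
  hence "pr (imps ?Gw (star (subst A (n, k) (V n w))))"
    using ctx_app[OF star_subst_from[OF wA _ _ freefor_nobv]] wf sn by simp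
  hence "pr (imps ?Gw (star (subst A (n, k) ?z)))"
    using ctx_app2[OF star_approx_cong[OF wA _ _ _ freefor_nobv freefor_self] mb_E2[OF hm]] wf sn by simp
  hence "pr (imps ?Gw (star A))" by simp
  moreover have "(n, w) \<notin> fv (star A)" "(n, w) \<notin> \<Union> (fv ` set ?Ga)"
    using wf fv_star[OF wA] fv_star_mem[of ?z n ?X] by (auto simp: FIff_def)
  ultimately have "pr (imps ?Ga (star A))"
    using star_mem_elim[OF ctx_hyp[of ?SM ?Ga]] wf wGw sn by simp
  thus ?thesis by (rule ctx_impI)
qed

lemma compr_star_mem_from:
  assumes wA: "wff s A" and sn: "Suc n \<le> s"
  shows "pr (imps [FAll n k (FIff (FMem n (V n k) (V (Suc n) i)) (star A))]
                  (FImp (star A) (star (FMem n (V n k) (V (Suc n) i)))))"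
proof -
  let ?X = "V (Suc n) i" and ?z = "V n k"
  let ?P = "FAll n k (FIff (FMem n ?z ?X) (star A))"
  let ?Gb = "[star A, ?P]"
  have wGb: "wffl s ?Gb" using wA sn by (simp add: wff_star FIff_def)
  have "pr (imps ?Gb (FIff (FMem n ?z ?X) (star A)))"
    using ctx_allE_self[OF ctx_hyp[of ?P ?Gb]] wGb by simp
  hence "pr (imps ?Gb (FMem n ?z ?X))"
    using ctx_mp[OF iff_E2 ctx_hyp[of "star A" ?Gb]] wGb by simp
  hence "pr (imps ?Gb (star (FMem n ?z ?X)))"
    using star_mem_intro ctx_lift[OF approx_refl[of ?z n] wGb] sn by simp
  thus ?thesis by (rule ctx_impI)
qed

text \<open>The translation of a comprehension instance for \<open>A\<close> follows from the comprehension
  instance for \<open>A\<^sup>*\<close>, which has the same free variables.\<close>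
lemma star_compr_ax:
  assumes srt: "srt A \<le> n + 1" and fX: "(n + 1, i) \<notin> fv A"
    and w: "wff s (FEx (n + 1) i (FAll n k (FIff (FMem n (V n k) (V (n + 1) i)) A)))"
  shows "pr (star (FEx (n + 1) i (FAll n k (FIff (FMem n (V n k) (V (n + 1) i)) A))))"
proof -
  let ?X = "V (Suc n) i" and ?z = "V n k"
  have wA: "wff s A" and sn: "Suc n \<le> s" using w by (auto simp: FIff_def)
  let ?P = "FAll n k (FIff (FMem n ?z ?X) (star A))"
  let ?Q = "FAll n k (FIff (star (FMem n ?z ?X)) (star A))"
  have "pr (FEx (n + 1) i (FAll n k (FIff (FMem n (V n k) (V (n + 1) i)) (star A))))"
  proof (rule prv.nax[OF tiax.compr])
    show "srt (star A) \<le> n + 1" using srt srt_star[OF wA] by simp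
    show "(n + 1, i) \<notin> fv (star A)" using fX fv_star[OF wA] by simp
    show "wff s (FEx (n + 1) i (FAll n k (FIff (FMem n (V n k) (V (n + 1) i)) (star A))))"
      using sn wff_star[OF wA] by (simp add: FIff_def)
  qed
  hence compr_inst: "pr (FEx (Suc n) i ?P)" by simp
  have "pr (imps [?P] (FIff (star (FMem n ?z ?X)) (star A)))"
    using iff_I[OF compr_star_mem_to[OF wA sn] compr_star_mem_from[OF wA sn]] .
  hence "pr (imps [?P] ?Q)" using ctx_allI sn by (simp add: FIff_def)
  hence "pr (FImp (FEx (Suc n) i ?P) (FEx (Suc n) i ?Q))" using ex_mono sn by (simp add: imps1)
  hence "pr (FEx (Suc n) i ?Q)" using prv.mp compr_inst by blast
  thus ?thesis by (simp add: star_FIff)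
qed

lemma half_of_mem_imp:
  assumes wX: "wt X (Suc n)" and wY: "wt Y (Suc n)" and sn: "Suc n \<le> s"
  shows "pr (FImp (FAll n k (FImp (star (FMem n (V n k) X)) (star (FMem n (V n k) Y)))) (half n X Y))"
proof -
  let ?H = "FAll n k (FImp (star (FMem n (V n k) X)) (star (FMem n (V n k) Y)))"
  let ?G1 = "[FMem n (V n 0) X, ?H]"
  have wH: "wff s ?H" using wX wY sn by (simp add: wff_star_mem)
  have wG1: "wffl s ?G1" using wH wX sn by simp
  let ?EX = "FEx n (Suc k) (mb n (Suc k) (V n 0) X)" and ?EY = "FEx n (Suc k) (mb n (Suc k) (V n 0) Y)"
  have eq: "subst (FImp (star (FMem n (V n k) X)) (star (FMem n (V n k) Y))) (n, k) (V n 0) = FImp ?EX ?EY"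
    using wX wY by (simp add: star_FMem subst_mb_gen)
  have ff: "freefor (V n 0) (n, k) (FImp (star (FMem n (V n k) X)) (star (FMem n (V n k) Y)))"
    by (simp add: star_FMem freefor_mb)
  have h: "pr (imps ?G1 (FImp ?EX ?EY))"
    using ctx_allE[OF ctx_hyp[of ?H ?G1] _ ff] wG1 eq by simp
  have "pr (imps ?G1 (mb n 0 (V n 0) X))"
    using mb_I[OF ctx_hyp[of "FMem n (V n 0) X" ?G1] ctx_lift[OF approx_refl[of "V n 0" n]]] wG1 sn by simp
  hence ex1: "pr (imps ?G1 ?EX)"
    using ctx_exI[of ?G1 "mb n (Suc k) (V n 0) X" n "Suc k" "V n 0"] subst_mb[of n "Suc k" "V n 0" X 0]
      freefor_mb wX sn by (simp add: wff_mb)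
  have ex2: "pr (imps ?G1 ?EY)" using ctx_mp[OF h ex1] .
  let ?B = "FAnd (FMem n (V n 1) Y) (approx n (V n 0) (V n 1))"
  let ?Goal = "FEx n 1 ?B"
  let ?G2 = "mb n (Suc k) (V n 0) Y # ?G1"
  have wG2: "wffl s ?G2" using wG1 wY sn by (simp add: wff_mb)
  have hm: "pr (imps ?G2 (mb n (Suc k) (V n 0) Y))" using ctx_hyp[of _ ?G2] wG2 by simp
  have "pr (imps ?G2 (FAnd (FMem n (V n (Suc k)) Y) (approx n (V n 0) (V n (Suc k)))))"
    using ctx_conjI[OF mb_E1[OF hm] ctx_sym[OF mb_E2[OF hm]]] sn by simp
  moreover have "subst ?B (n, 1) (V n (Suc k)) = FAnd (FMem n (V n (Suc k)) Y) (approx n (V n 0) (V n (Suc k)))"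
    using wY by (simp add: subst_approx)
  moreover have "freefor (V n (Suc k)) (n, 1) ?B" by (simp add: freefor_approx)
  moreover have "wff s ?B" using wY sn by (simp add: wff_approx)
  ultimately have g2: "pr (imps ?G2 ?Goal)" using ctx_exI[of ?G2 ?B n 1 "V n (Suc k)"] sn by simp
  have f1: "(n, Suc k) \<notin> fv ?Goal" using wY by (auto simp: fv_approx dest: vt_type)
  have f2: "(n, Suc k) \<notin> \<Union> (fv ` set ?G1)" using wX wY by (auto simp: fv_star_mem dest: vt_type)
  have "pr (imps ?G1 ?Goal)" using ctx_exE[OF ex2 g2 f1 f2] sn by simp
  hence "pr (imps [?H] (FImp (FMem n (V n 0) X) ?Goal))" by (rule ctx_impI)
  moreover have "(n, 0) \<notin> \<Union> (fv ` set [?H])" using wX wY by (auto simp: fv_star_mem dest: vt_type)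
  ultimately have "pr (imps [?H] (half n X Y))" unfolding half_def using ctx_allI sn by simp
  thus ?thesis by (simp add: imps1)
qed

text \<open>The translated extensionality axiom is derivable without extensionality: its conclusion
  \<open>X \<approx> Y\<close> consists of the two halves given by \<open>half_of_mem_imp\<close>.\<close>
lemma star_ext_ax:
  assumes w: "wff s (FImp (FAll n k (FIff (FMem n (V n k) (V (n + 1) i)) (FMem n (V n k) (V (n + 1) j))))
                             (FEq (n + 1) (V (n + 1) i) (V (n + 1) j)))"
  shows "pr (star (FImp (FAll n k (FIff (FMem n (V n k) (V (n + 1) i)) (FMem n (V n k) (V (n + 1) j))))
                             (FEq (n + 1) (V (n + 1) i) (V (n + 1) j))))"
proof -
  let ?X = "V (Suc n) i" and ?Y = "V (Suc n) j"
  have sn: "Suc n \<le> s" using w by simp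
  let ?SX = "star (FMem n (V n k) ?X)" and ?SY = "star (FMem n (V n k) ?Y)"
  let ?Hi = "FAll n k (FIff ?SX ?SY)"
  have wS: "wff s ?SX" "wff s ?SY" using sn by (auto simp: wff_star_mem)
  let ?G = "[?Hi]"
  have wG: "wffl s ?G" using wS sn by (simp add: FIff_def)
  have i1: "pr (FImp (FIff ?SX ?SY) (FImp ?SX ?SY))" and i2: "pr (FImp (FIff ?SX ?SY) (FImp ?SY ?SX))"
    unfolding FIff_def by (rule ax, use wS in \<open>auto intro: logax.intros\<close>)+
  have a1: "pr (imps ?G (FAll n k (FImp ?SX ?SY)))"
    using ctx_app[OF all_mono[OF i1 _] ctx_hyp[of ?Hi ?G]] wG sn by simp
  have a2: "pr (imps ?G (FAll n k (FImp ?SY ?SX)))"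
    using ctx_app[OF all_mono[OF i2 _] ctx_hyp[of ?Hi ?G]] wG sn by simp
  have "pr (imps ?G (half n ?X ?Y))" using ctx_app[OF half_of_mem_imp a1] sn by simp
  moreover have "pr (imps ?G (half n ?Y ?X))" using ctx_app[OF half_of_mem_imp a2] sn by simp
  ultimately have "pr (imps ?G (approx (Suc n) ?X ?Y))" unfolding approx_Suc using ctx_conjI by simp
  thus ?thesis by (simp add: imps1 star_FIff)
qed

text \<open>Every translated axiom of \<open>TI\<^sub>s\<close> is derivable in either theory; the arithmetic
  axioms only involve type 0, where \<open>*\<close> is the identity.\<close>
lemma star_tiax: assumes "tiax s True A" "wff s A" shows "pr (star A)"
  using assms(1)
proof (cases rule: tiax.cases)
  case (succ_ne0 i) thus ?thesis using assms(2) by (simp add: star_FNeg) (rule prv.nax, auto intro: tiax.intros)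
next
  case (succ_inj i j) thus ?thesis using assms(2) by simp (rule prv.nax, auto intro: tiax.intros)
next
  case (plus0 i) thus ?thesis using assms(2) by simp (rule prv.nax, auto intro: tiax.intros)
next
  case (plusS i j) thus ?thesis using assms(2) by simp (rule prv.nax, auto intro: tiax.intros)
next
  case (times0 i) thus ?thesis using assms(2) by simp (rule prv.nax, auto intro: tiax.intros)
next
  case (timesS i j) thus ?thesis using assms(2) by simp (rule prv.nax, auto intro: tiax.intros)
next
  case (ind B i) thus ?thesis using star_ind_ax assms(2) by blast
next
  case (compr B n i k) thus ?thesis using star_compr_ax assms(2) by blast
next
  case (ext n k i j) thus ?thesis using star_ext_ax assms(2) by blast
qed

end

section \<open>The translation theorem\<close>

text \<open>The eigenvariable conditions survive because \<open>*\<close> keeps free variables.\<close>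
lemma star_derivation: "prv s True A \<Longrightarrow> prv s False (star A)"
proof (induction s "True" A rule: prv.induct)
  case (lax A s) thus ?case using star_logax by blast
next
  case (nax s A) thus ?case using star_tiax by blast
next
  case (mp s A B) thus ?case using prv.mp by simp
next
  case (allI s B A n i)
  have "wff s B" using prv_wff[OF allI.hyps(1)] by simp
  thus ?case using prv.allI allI fv_star by simp
next
  case (exE s A B n i)
  have "wff s B" using prv_wff[OF exE.hyps(1)] by simp
  thus ?case using prv.exE exE fv_star by simp
qed

lemma star_foldr_All: "star (foldr (\<lambda>(n, i) B. FAll n i B) L A) = foldr (\<lambda>(n, i) B. FAll n i B) L (star A)"
  by (induction L) auto

lemma gen_foldr_All:
  "prv s e A \<Longrightarrow> \<forall>(n, i)\<in>set L. n \<le> s \<Longrightarrow> prv s e (foldr (\<lambda>(n, i) B. FAll n i B) L A)"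
proof (induction L)
  case Nil thus ?case by simp
next
  case (Cons a L)
  obtain n i where a: "a = (n, i)" by (cases a)
  thus ?case using Cons gen[of s e _ n i] by simp
qed

theorem lemma12p1:
  fixes s :: nat and \<phi> :: fm
  assumes "prv s True \<phi>"
  shows "prv s False (star (closure \<phi>))"
proof -
  have star_thm: "prv s False (star \<phi>)" using star_derivation assms by blast
  have "wff s \<phi>" using prv_wff assms by blast
  hence "\<forall>(n, i)\<in>set (sorted_list_of_set (fv \<phi>)). n \<le> s" using fv_types by (auto split: prod.splits)
  hence "prv s False (foldr (\<lambda>(n, i) B. FAll n i B) (sorted_list_of_set (fv \<phi>)) (star \<phi>))"
    using gen_foldr_All[OF star_thm] by blast
  thus ?thesis unfolding closure_def star_foldr_All .
qed

end
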